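(* Let $X$ and $Y$ be real Banach spaces such that $(\mathcal F(X),Y)$ has the Bishop-Phelps-Bollob\'as property for compact operators witnessed by a function $\varepsilon\mapsto\eta(\varepsilon)$. Let $0<\varepsilon<1$, $f\in\mathrm{Lip}_{0\mathcal K}(X,Y)$ with $\|f\|=1$, and $(x,y)\in\widetilde X$ with $\frac{\|f(x)-f(y)\|}{\|x-y\|}>1-\eta(\varepsilon)$. Then for every $h\in\mathrm{Lip}_0(X,Y)$ with $\|h\|=1$ and $\frac{\|h(x)-h(y)\|}{\|x-y\|}=1$, there exist $g\in\mathrm{Lip}_{0\mathcal K}(X,Y)$ with $\|g\|=1$, $z\in S_Y$ and a sequence $(v_n,w_n)\in\widetilde X$ such that $\|g-f\|<\varepsilon$, $\frac{\|h(v_n)-h(w_n)\|}{\|v_n-w_n\|}>1-\varepsilon$ for every $n$, and $\frac{g(v_n)-g(w_n)}{\|v_n-w_n\|}\to z$.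
   Context: $\widetilde X=\{(x,y)\in X^2:x\neq y\}$. $\mathrm{Lip}_0(X,Y)$ is the Banach space of Lipschitz $f\colon X\to Y$ with $f(0)=0$ and norm $\|f\|=\sup_{(x,y)\in\widetilde X}\|f(x)-f(y)\|/\|x-y\|$; $\mathrm{Lip}_{0\mathcal K}(X,Y)$ is the subspace of those $f$ whose set of slopes $\{\frac{f(x)-f(y)}{\|x-y\|}:(x,y)\in\widetilde X\}$ is relatively compact. $\mathcal F(X)$ is the closed span of $\{\delta_x:x\in X\}$ in $\mathrm{Lip}_0(X,\mathbb R)^*$, $\delta_x(g)=g(x)$. A pair $(Z,Y)$ has the BPBp for compact operators witnessed by a function $\eta\colon(0,1)\to(0,\infty)$ if for every $\varepsilon\in(0,1)$, whenever $T\colon Z\to Y$ is compact linear with $\|T\|=1$ and $w\in S_Z$ satisfies $\|Tw\|>1-\eta(\varepsilon)$, there exist compact linear $S\colon Z\to Y$ with $\|S\|=1$ and $v\in S_Z$ with $\|Sv\|=1$, $\|S-T\|<\varepsilon$, $\|v-w\|<\varepsilon$. *)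

theory Defs
  imports "HOL-Analysis.Analysis"
begin

definition offdiag :: "('a \<times> 'a) set" where
  "offdiag = {(x, y). x \<noteq> y}"

definition lip0 :: "('a::real_normed_vector \<Rightarrow> 'c::real_normed_vector) set" where
  "lip0 = {f. f 0 = 0 \<and> (\<exists>C. C-lipschitz_on UNIV f)}"

definition lipnorm :: "('a::real_normed_vector \<Rightarrow> 'c::real_normed_vector) \<Rightarrow> real" where
  "lipnorm f = (SUP p \<in> offdiag. norm (f (fst p) - f (snd p)) / norm (fst p - snd p))"

definition slopes :: "('a::real_normed_vector \<Rightarrow> 'c::real_normed_vector) \<Rightarrow> 'c set" where
  "slopes f = {(f x - f y) /\<^sub>R norm (x - y) | x y. x \<noteq> y}"

definition lip0K :: "('a::real_normed_vector \<Rightarrow> 'c::real_normed_vector) set" where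
  "lip0K = {f \<in> lip0. compact (closure (slopes f))}"

text \<open>Elements of the dual Lip_0(X,R)^*, represented as functionals on 'a \<Rightarrow> real
  which vanish outside Lip_0(X,R); dual norm.\<close>
definition dnorm :: "(('a::real_normed_vector \<Rightarrow> real) \<Rightarrow> real) \<Rightarrow> real" where
  "dnorm \<phi> = (SUP g \<in> {g \<in> lip0. lipnorm g \<le> 1}. \<bar>\<phi> g\<bar>)"

definition delta_span :: "(('a::real_normed_vector \<Rightarrow> real) \<Rightarrow> real) set" where
  "delta_span = {\<lambda>g. if g \<in> lip0 then (\<Sum>x\<in>A. c x * g x) else 0 | A c. finite A}"

text \<open>The Lipschitz-free space F(X): bounded linear functionals on Lip_0(X,R)
  (vanishing outside Lip_0(X,R)) in the norm closure of the span of the deltas.\<close>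
definition freesp :: "(('a::real_normed_vector \<Rightarrow> real) \<Rightarrow> real) set" where
  "freesp = {\<phi>. (\<forall>g. g \<notin> lip0 \<longrightarrow> \<phi> g = 0)
     \<and> (\<forall>g\<in>lip0. \<forall>g'\<in>lip0. \<forall>a b. \<phi> (\<lambda>t. a * g t + b * g' t) = a * \<phi> g + b * \<phi> g')
     \<and> (\<exists>C. \<forall>g\<in>lip0. \<bar>\<phi> g\<bar> \<le> C * lipnorm g)
     \<and> (\<forall>e>0. \<exists>\<psi>\<in>delta_span. dnorm (\<lambda>g. \<phi> g - \<psi> g) < e)}"

text \<open>Compact linear operators F(X) \<rightarrow> Y (only their values on F(X) matter).\<close>
definition compact_op_free ::
  "((('a::real_normed_vector \<Rightarrow> real) \<Rightarrow> real) \<Rightarrow> 'b::real_normed_vector) \<Rightarrow> bool" where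
  "compact_op_free T \<longleftrightarrow>
     (\<forall>\<phi>\<in>freesp. \<forall>\<psi>\<in>freesp. \<forall>a b. T (\<lambda>g. a * \<phi> g + b * \<psi> g) = a *\<^sub>R T \<phi> + b *\<^sub>R T \<psi>)
     \<and> compact (closure (T ` {\<phi> \<in> freesp. dnorm \<phi> \<le> 1}))"

definition opnorm_free ::
  "((('a::real_normed_vector \<Rightarrow> real) \<Rightarrow> real) \<Rightarrow> 'b::real_normed_vector) \<Rightarrow> real" where
  "opnorm_free T = (SUP \<phi> \<in> {\<phi> \<in> freesp. dnorm \<phi> \<le> 1}. norm (T \<phi>))"

definition bpbp_compact_free ::
  "'a::real_normed_vector itself \<Rightarrow> 'b::real_normed_vector itself \<Rightarrow> (real \<Rightarrow> real) \<Rightarrow> bool" where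
  "bpbp_compact_free TYPE('a) TYPE('b) eta \<longleftrightarrow>
     (\<forall>\<epsilon>. 0 < \<epsilon> \<and> \<epsilon> < 1 \<longrightarrow> 0 < eta \<epsilon>) \<and>
     (\<forall>\<epsilon>. 0 < \<epsilon> \<and> \<epsilon> < 1 \<longrightarrow>
       (\<forall>(T :: (('a \<Rightarrow> real) \<Rightarrow> real) \<Rightarrow> 'b) w.
          compact_op_free T \<and> opnorm_free T = 1 \<and> w \<in> freesp \<and> dnorm w = 1
          \<and> norm (T w) > 1 - eta \<epsilon> \<longrightarrow>
          (\<exists>(S :: (('a \<Rightarrow> real) \<Rightarrow> real) \<Rightarrow> 'b) v.
             compact_op_free S \<and> opnorm_free S = 1 \<and> v \<in> freesp \<and> dnorm v = 1
             \<and> norm (S v) = 1 \<and> opnorm_free (\<lambda>\<phi>. S \<phi> - T \<phi>) < \<epsilon>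
             \<and> dnorm (\<lambda>g. v g - w g) < \<epsilon>)))"

end

theory Submission
  imports Defs
begin

text \<open>
  A Lipschitz map \<open>f\<close> linearizes to an operator \<open>T\<^sub>f\<close> on the free space with
  \<open>T\<^sub>f \<delta>\<^sub>p = f p\<close>. It has norm \<open>lipnorm f\<close>, it maps the molecule
  \<open>m\<^sub>x\<^sub>y = (\<delta>\<^sub>x - \<delta>\<^sub>y) / norm (x - y)\<close> to the slope of \<open>f\<close> at \<open>(x, y)\<close>, and it is
  compact because the slopes of \<open>f\<close> lie close to a finite-dimensional subspace. The
  Bishop--Phelps--Bollobas property yields a compact \<open>S\<close> with \<open>norm (S - T\<^sub>f) < \<epsilon>\<close>
  attaining its norm at some \<open>v\<close> with \<open>norm (v - m\<^sub>x\<^sub>y) < \<epsilon>\<close>. Then \<open>g = S \<circ> \<delta>\<close>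
  has relatively compact slopes, \<open>lipnorm g \<le> 1\<close> and \<open>lipnorm (g - f) < \<epsilon>\<close>.

  Pairs at which \<open>g\<close> has slope almost 1 and \<open>h\<close> has slope above \<open>1 - \<epsilon>\<close> come from
  a finite combination \<open>\<psi> = \<Sum> c\<^sub>p \<delta>\<^sub>p\<close> close to \<open>v\<close>. Choose functionals \<open>l\<^sub>1, l\<^sub>2\<close>
  norming \<open>\<Sum> c\<^sub>p g p\<close> and \<open>\<Sum> c\<^sub>p h p\<close>. Applying \<open>\<psi>\<close> to the real Lipschitz function
  \<open>l\<^sub>1 \<circ> g + \<tau> (l\<^sub>2 \<circ> h)\<close> shows that its Lipschitz constant is at least about
  \<open>1 + \<tau> (1 - \<epsilon> + \<gamma>)\<close>, where \<open>\<gamma> = \<epsilon> - norm (v - m\<^sub>x\<^sub>y) > 0\<close> and \<open>h\<close> attains its norm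
  at \<open>(x, y)\<close>. Both slopes are at most 1, so a pair nearly attaining this constant works.
  Finally, compactness of the slopes of \<open>g\<close> gives a convergent subsequence.
\<close>

section \<open>Hahn--Banach for sublinear functionals\<close>

text \<open>Partial linear functionals below \<open>p\<close>, encoded by their graphs, to which Zorn's lemma is applied.\<close>
definition dominated_graph :: "('b::real_vector \<Rightarrow> real) \<Rightarrow> 'b \<Rightarrow> ('b \<times> real) set \<Rightarrow> bool" where
  "dominated_graph p u G \<longleftrightarrow> (u, p u) \<in> G \<and> (\<forall>y a. (y,a)\<in>G \<longrightarrow> a \<le> p y)
     \<and> (\<forall>y1 a1 y2 a2. (y1,a1)\<in>G \<longrightarrow> (y2,a2)\<in>G \<longrightarrow> (y1+y2, a1+a2) \<in> G)
     \<and> (\<forall>y a c. (y,a) \<in> G \<longrightarrow> (c *\<^sub>R y, c*a) \<in> G)"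

locale sublinear =
  fixes p :: "'b::real_vector \<Rightarrow> real"
  assumes subadditive: "\<And>x y. p (x + y) \<le> p x + p y"
      and pos_homogeneous: "\<And>c x. c \<ge> 0 \<Longrightarrow> p (c *\<^sub>R x) = c * p x"
begin

lemma at_zero: "p 0 = 0"
  using pos_homogeneous[of 0 0] by simp

lemma minus_le: "- p x \<le> p (- x)"
  using subadditive[of x "-x"] at_zero by simp

lemma dominated_graph_unique:
  assumes "dominated_graph p u G" "(y,a)\<in>G" "(y,b)\<in>G" shows "a = b"
proof -
  have "(y + (-1) *\<^sub>R y, a + (-1)*b) \<in> G" using assms unfolding dominated_graph_def by blast
  hence "a - b \<le> 0" using assms(1) at_zero unfolding dominated_graph_def by fastforce
  moreover have "(y + (-1) *\<^sub>R y, b + (-1)*a) \<in> G" using assms unfolding dominated_graph_def by blast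
  hence "b - a \<le> 0" using assms(1) at_zero unfolding dominated_graph_def by fastforce
  ultimately show ?thesis by simp
qed

lemma dominated_graph_line: "dominated_graph p u {(c *\<^sub>R u, c * p u) | c. True}"
  unfolding dominated_graph_def
proof (intro conjI allI impI)
  show "(u, p u) \<in> {(c *\<^sub>R u, c * p u) |c. True}" by (rule CollectI, rule exI[of _ 1]) simp
next
  fix y a assume "(y, a) \<in> {(c *\<^sub>R u, c * p u) |c. True}"
  then obtain c where c: "y = c *\<^sub>R u" "a = c * p u" by auto
  show "a \<le> p y"
  proof (cases "c \<ge> 0")
    case True then show ?thesis using c pos_homogeneous by simp
  next
    case False
    have e: "(-c) *\<^sub>R (-u) = y" using c by simp
    have "p y = p ((-c) *\<^sub>R (-u))" by (simp only: e)
    also have "\<dots> = (-c) * p (-u)" by (rule pos_homogeneous) (use False in linarith)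
    finally have "p y = (-c) * p (-u)" .
    moreover have "(-c) * (- p u) \<le> (-c) * p (-u)" using minus_le[of u] False
      by (intro mult_left_mono) auto
    ultimately show ?thesis using c by simp
  qed
next
  fix y1 a1 y2 a2 assume "(y1, a1) \<in> {(c *\<^sub>R u, c * p u) |c. True}" "(y2, a2) \<in> {(c *\<^sub>R u, c * p u) |c. True}"
  then obtain c1 c2 where "y1 = c1 *\<^sub>R u" "a1 = c1 * p u" "y2 = c2 *\<^sub>R u" "a2 = c2 * p u" by auto
  then show "(y1 + y2, a1 + a2) \<in> {(c *\<^sub>R u, c * p u) |c. True}"
    by (intro CollectI exI[of _ "c1+c2"]) (simp add: scaleR_add_left distrib_right)
next
  fix y a c assume "(y, a) \<in> {(c *\<^sub>R u, c * p u) |c. True}"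
  then obtain d where "y = d *\<^sub>R u" "a = d * p u" by auto
  then show "(c *\<^sub>R y, c * a) \<in> {(c *\<^sub>R u, c * p u) |c. True}"
    by (intro CollectI exI[of _ "c*d"]) simp
qed

lemma dominated_graph_chain_Union:
  assumes "C \<noteq> {}" "subset.chain {G. dominated_graph p u G} C"
  shows "dominated_graph p u (\<Union>C)"
proof -
  have ok: "\<And>G. G \<in> C \<Longrightarrow> dominated_graph p u G" using assms(2) unfolding subset.chain_def by auto
  have ch: "\<And>G H. G \<in> C \<Longrightarrow> H \<in> C \<Longrightarrow> G \<subseteq> H \<or> H \<subseteq> G" using assms(2) unfolding subset.chain_def by auto
  obtain G0 where "G0 \<in> C" using assms(1) by auto
  show ?thesis unfolding dominated_graph_def
  proof (intro conjI allI impI)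
    show "(u, p u) \<in> \<Union> C" using ok[OF \<open>G0 \<in> C\<close>] \<open>G0 \<in> C\<close> unfolding dominated_graph_def by blast
  next
    fix y a assume "(y, a) \<in> \<Union> C" then show "a \<le> p y" using ok unfolding dominated_graph_def by blast
  next
    fix y1 a1 y2 a2 assume 1: "(y1, a1) \<in> \<Union> C" and 2: "(y2, a2) \<in> \<Union> C"
    then obtain G1 G2 where g: "G1 \<in> C" "G2 \<in> C" "(y1,a1) \<in> G1" "(y2,a2)\<in>G2" by auto
    show "(y1 + y2, a1 + a2) \<in> \<Union> C"
    proof (cases "G1 \<subseteq> G2")
      case True then show ?thesis using ok[OF g(2)] g unfolding dominated_graph_def by blast
    next
      case False then have "G2 \<subseteq> G1" using ch g by blast
      then show ?thesis using ok[OF g(1)] g unfolding dominated_graph_def by blast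
    qed
  next
    fix y a c assume "(y, a) \<in> \<Union> C" then show "(c *\<^sub>R y, c * a) \<in> \<Union> C"
      using ok unfolding dominated_graph_def by blast
  qed
qed

lemma dominated_graph_extension_le:
  assumes ok: "dominated_graph p u G" and y0: "(y0, a0) \<in> G"
    and lower: "\<And>y a. (y, a) \<in> G \<Longrightarrow> a - p (y - e) \<le> c"
    and upper: "\<And>y a. (y, a) \<in> G \<Longrightarrow> c \<le> p (y + e) - a"
  shows "a0 + t * c \<le> p (y0 + t *\<^sub>R e)"
proof (cases t "0::real" rule: linorder_cases)
  case equal
  then show ?thesis using ok y0 unfolding dominated_graph_def by auto
next
  case greater
  have "((1/t) *\<^sub>R y0, (1/t) * a0) \<in> G" using ok y0 unfolding dominated_graph_def by blast
  from upper[OF this] have "t * c \<le> t * p ((1/t) *\<^sub>R y0 + e) - a0" using greater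
    by (simp add: field_simps mult_left_mono)
  also have "t * p ((1/t) *\<^sub>R y0 + e) = p (t *\<^sub>R ((1/t) *\<^sub>R y0 + e))" using pos_homogeneous greater by simp
  also have "t *\<^sub>R ((1/t) *\<^sub>R y0 + e) = y0 + t *\<^sub>R e" using greater by (simp add: scaleR_add_right)
  finally show ?thesis by simp
next
  case less
  define s where "s = -t"
  have s: "s > 0" using less s_def by simp
  have "((1/s) *\<^sub>R y0, (1/s) * a0) \<in> G" using ok y0 unfolding dominated_graph_def by blast
  from lower[OF this] have "a0 - s * p ((1/s) *\<^sub>R y0 - e) \<le> s * c" using s
    by (simp add: field_simps)
  also have "s * p ((1/s) *\<^sub>R y0 - e) = p (s *\<^sub>R ((1/s) *\<^sub>R y0 - e))" using pos_homogeneous s by simp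
  also have "s *\<^sub>R ((1/s) *\<^sub>R y0 - e) = y0 + t *\<^sub>R e" using s by (simp add: scaleR_diff_right s_def)
  finally show ?thesis using s_def by simp
qed

lemma dominated_graph_extend:
  assumes ok: "dominated_graph p u G" and e: "e \<notin> fst ` G"
  shows "\<exists>G'. dominated_graph p u G' \<and> G \<subseteq> G' \<and> G' \<noteq> G"
proof -
  have key: "a1 - p (y1 - e) \<le> p (y2 + e) - a2" if "(y1,a1)\<in>G" "(y2,a2)\<in>G" for y1 a1 y2 a2
  proof -
    have "(y1+y2, a1+a2) \<in> G" using ok that unfolding dominated_graph_def by blast
    hence "a1 + a2 \<le> p (y1 + y2)" using ok unfolding dominated_graph_def by blast
    also have "\<dots> \<le> p (y1 - e) + p (y2 + e)" using subadditive[of "y1 - e" "y2 + e"] by simp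
    finally show ?thesis by simp
  qed
  define L where "L = {a - p (y - e) | y a. (y,a) \<in> G}"
  define c where "c = Sup L"
  have uG: "(u, p u) \<in> G" using ok unfolding dominated_graph_def by blast
  have Lne: "L \<noteq> {}" using uG unfolding L_def by blast
  have Lbdd: "bdd_above L" unfolding L_def bdd_above_def using key uG by blast
  have lower: "a - p (y - e) \<le> c" if "(y,a)\<in>G" for y a
    unfolding c_def using that Lbdd by (intro cSup_upper) (auto simp: L_def)
  have upper: "c \<le> p (y + e) - a" if "(y,a)\<in>G" for y a
    unfolding c_def using that Lne key by (intro cSup_least) (auto simp: L_def)
  define G' where "G' = {(y + t *\<^sub>R e, a + t * c) | y a t. (y,a) \<in> G}"
  have GG': "G \<subseteq> G'" unfolding G'_def by force
  have "(0, 0) \<in> G" using ok uG unfolding dominated_graph_def by (metis mult_zero_left scale_zero_left)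
  hence "(e, c) \<in> G'" unfolding G'_def by (intro CollectI exI[of _ 0] exI[of _ 0] exI[of _ 1]) simp
  hence neq: "G' \<noteq> G" using e by force
  have okG': "dominated_graph p u G'" unfolding dominated_graph_def
  proof (intro conjI allI impI)
    show "(u, p u) \<in> G'" using GG' uG by blast
  next
    fix y a assume "(y, a) \<in> G'"
    then show "a \<le> p y"
      unfolding G'_def using dominated_graph_extension_le[OF ok _ lower upper] by blast
  next
    fix y1 a1 y2 a2 assume "(y1, a1) \<in> G'" "(y2, a2) \<in> G'"
    then obtain z1 b1 t1 z2 b2 t2 where h: "y1 = z1 + t1 *\<^sub>R e" "a1 = b1 + t1 * c" "(z1,b1) \<in> G"
       "y2 = z2 + t2 *\<^sub>R e" "a2 = b2 + t2 * c" "(z2,b2) \<in> G" unfolding G'_def by blast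
    have "(z1+z2, b1+b2) \<in> G" using ok h unfolding dominated_graph_def by blast
    then show "(y1 + y2, a1 + a2) \<in> G'" unfolding G'_def using h
      by (intro CollectI exI[of _ "z1+z2"] exI[of _ "b1+b2"] exI[of _ "t1+t2"])
         (simp add: algebra_simps)
  next
    fix y a d assume "(y, a) \<in> G'"
    then obtain z b t where h: "y = z + t *\<^sub>R e" "a = b + t * c" "(z,b) \<in> G" unfolding G'_def by blast
    have "(d *\<^sub>R z, d * b) \<in> G" using ok h unfolding dominated_graph_def by blast
    then show "(d *\<^sub>R y, d * a) \<in> G'" unfolding G'_def using h
      by (intro CollectI exI[of _ "d *\<^sub>R z"] exI[of _ "d*b"] exI[of _ "d*t"])
         (simp add: algebra_simps)
  qed
  show ?thesis using okG' GG' neq by blast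
qed

lemma hahn_banach:
  "\<exists>l. linear l \<and> (\<forall>x. l x \<le> p x) \<and> l u = p u"
proof -
  have "\<exists>M\<in>{G. dominated_graph p u G}. \<forall>X\<in>{G. dominated_graph p u G}. M \<subseteq> X \<longrightarrow> X = M"
    using dominated_graph_line by (intro subset_Zorn_nonempty) (auto intro: dominated_graph_chain_Union)
  then obtain M where okM: "dominated_graph p u M" and maxM: "\<And>X. dominated_graph p u X \<Longrightarrow> M \<subseteq> X \<Longrightarrow> X = M" by blast
  have dom: "\<exists>a. (y,a) \<in> M" for y
  proof (rule ccontr)
    assume "\<not> (\<exists>a. (y,a) \<in> M)"
    hence "y \<notin> fst ` M" by force
    from dominated_graph_extend[OF okM this] maxM show False by blast
  qed
  define l where "l y = (SOME a. (y,a) \<in> M)" for y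
  have lM: "(y, l y) \<in> M" for y unfolding l_def using dom by (metis someI_ex)
  have lv: "(y,a) \<in> M \<Longrightarrow> l y = a" for y a using dominated_graph_unique[OF okM lM] by blast
  have "linear l"
  proof (rule linearI)
    fix x y show "l (x + y) = l x + l y" using okM lM lv unfolding dominated_graph_def by blast
  next
    fix c x show "l (c *\<^sub>R x) = c *\<^sub>R l x" using okM lM lv unfolding dominated_graph_def by force
  qed
  moreover have "\<forall>x. l x \<le> p x" using okM lM unfolding dominated_graph_def by blast
  moreover have "l u = p u" using okM lv unfolding dominated_graph_def by blast
  ultimately show ?thesis by blast
qed

end

lemma norming_functional:
  fixes u :: "'b::real_normed_vector"
  shows "\<exists>l. linear l \<and> (\<forall>x. \<bar>l x\<bar> \<le> norm x) \<and> l u = norm u"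
proof -
  interpret sublinear norm by unfold_locales (auto simp: norm_triangle_ineq)
  obtain l where l: "linear l" "\<forall>x. l x \<le> norm x" "l u = norm u" using hahn_banach by blast
  have "\<bar>l x\<bar> \<le> norm x" for x
    using l(2)[rule_format, of x] l(2)[rule_format, of "-x"] linear_neg[OF l(1), of x] by auto
  with l show ?thesis by blast
qed

section \<open>The Lipschitz norm\<close>

lemma lip0_LipschitzE:
  assumes "F \<in> lip0" obtains C where "C \<ge> 0" "\<And>p q. norm (F p - F q) \<le> C * norm (p - q)"
  using assms unfolding lip0_def lipschitz_on_def by (auto simp: dist_norm)

lemma lip0I:
  fixes F :: "'a::real_normed_vector \<Rightarrow> 'b::real_normed_vector"
  assumes "F 0 = 0" "\<And>p q. norm (F p - F q) \<le> C * norm (p - q)"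
  shows "F \<in> lip0"
proof -
  have "(max C 0)-lipschitz_on UNIV F" unfolding lipschitz_on_def dist_norm
  proof (intro conjI ballI)
    fix p q :: 'a
    have "C * norm (p - q) \<le> max C 0 * norm (p - q)" by (intro mult_right_mono) auto
    then show "norm (F p - F q) \<le> max C 0 * norm (p - q)" using assms(2)[of p q] by linarith
  qed simp
  then show ?thesis using assms(1) unfolding lip0_def by blast
qed

lemma lip0_lincomb:
  assumes "F \<in> lip0" "G \<in> lip0"
  shows "(\<lambda>t. a *\<^sub>R F t + b *\<^sub>R G t) \<in> lip0"
proof -
  obtain C1 where C1: "C1 \<ge> 0" "\<And>p q. norm (F p - F q) \<le> C1 * norm (p - q)" using lip0_LipschitzE[OF assms(1)] by blast
  obtain C2 where C2: "C2 \<ge> 0" "\<And>p q. norm (G p - G q) \<le> C2 * norm (p - q)" using lip0_LipschitzE[OF assms(2)] by blast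
  have F0: "F 0 = 0" and G0: "G 0 = 0" using assms unfolding lip0_def by auto
  show ?thesis
  proof (rule lip0I[where C = "\<bar>a\<bar> * C1 + \<bar>b\<bar> * C2"])
    show "a *\<^sub>R F 0 + b *\<^sub>R G 0 = 0" using F0 G0 by simp
  next
    fix p q
    have "norm ((a *\<^sub>R F p + b *\<^sub>R G p) - (a *\<^sub>R F q + b *\<^sub>R G q)) = norm (a *\<^sub>R (F p - F q) + b *\<^sub>R (G p - G q))"
      by (simp add: algebra_simps)
    also have "\<dots> \<le> \<bar>a\<bar> * norm (F p - F q) + \<bar>b\<bar> * norm (G p - G q)"
      by (metis norm_scaleR norm_triangle_ineq)
    also have "\<dots> \<le> \<bar>a\<bar> * (C1 * norm (p - q)) + \<bar>b\<bar> * (C2 * norm (p - q))"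
      by (intro add_mono mult_left_mono C1 C2) auto
    finally show "norm ((a *\<^sub>R F p + b *\<^sub>R G p) - (a *\<^sub>R F q + b *\<^sub>R G q)) \<le> (\<bar>a\<bar> * C1 + \<bar>b\<bar> * C2) * norm (p - q)"
      by (simp add: algebra_simps)
  qed
qed

lemma lip0_lincomb_real:
  fixes g g' :: "'a::real_normed_vector \<Rightarrow> real"
  assumes "g \<in> lip0" "g' \<in> lip0"
  shows "(\<lambda>t. a * g t + b * g' t) \<in> lip0"
  using lip0_lincomb[OF assms, of a b] by simp

lemma bdd_above_slope_norms:
  assumes "F \<in> lip0"
  shows "bdd_above ((\<lambda>p. norm (F (fst p) - F (snd p)) / norm (fst p - snd p)) ` offdiag)"
proof -
  obtain C where C: "C \<ge> 0" "\<And>p q. norm (F p - F q) \<le> C * norm (p - q)" using lip0_LipschitzE[OF assms] by blast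
  have "norm (F (fst p) - F (snd p)) / norm (fst p - snd p) \<le> C" if "p \<in> offdiag" for p
  proof -
    have "norm (fst p - snd p) > 0" using that unfolding offdiag_def by auto
    then show ?thesis using C(2)[of "fst p" "snd p"] by (simp add: divide_le_eq)
  qed
  then show ?thesis by (intro bdd_aboveI2) auto
qed

lemma slope_le_lipnorm:
  assumes "F \<in> lip0" "p \<noteq> q"
  shows "norm (F p - F q) / norm (p - q) \<le> lipnorm F"
  unfolding lipnorm_def using assms
  by (intro cSUP_upper2[OF bdd_above_slope_norms[OF assms(1)], of "(p,q)"]) (auto simp: offdiag_def)

lemma lipnorm_Lipschitz:
  assumes "F \<in> lip0"
  shows "norm (F p - F q) \<le> lipnorm F * norm (p - q)"
proof (cases "p = q")
  case True then show ?thesis by simp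
next
  case False
  then have "norm (p - q) > 0" by simp
  with slope_le_lipnorm[OF assms False] show ?thesis by (simp add: divide_le_eq)
qed

section \<open>Functionals on Lipschitz real functions and the free space\<close>

definition dual_bounded :: "(('a::real_normed_vector \<Rightarrow> real) \<Rightarrow> real) \<Rightarrow> bool" where
  "dual_bounded \<phi> \<longleftrightarrow> (\<exists>C. \<forall>k\<in>lip0. lipnorm k \<le> 1 \<longrightarrow> \<bar>\<phi> k\<bar> \<le> C)"

definition lip_linear :: "(('a::real_normed_vector \<Rightarrow> real) \<Rightarrow> real) \<Rightarrow> bool" where
  "lip_linear \<phi> \<longleftrightarrow> (\<forall>g\<in>lip0. \<forall>g'\<in>lip0. \<forall>a b. \<phi> (\<lambda>t. a * g t + b * g' t) = a * \<phi> g + b * \<phi> g')"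

definition delta_comb :: "'a set \<Rightarrow> ('a \<Rightarrow> real) \<Rightarrow> ('a::real_normed_vector \<Rightarrow> real) \<Rightarrow> real" where
  "delta_comb A c = (\<lambda>k. if k \<in> lip0 then (\<Sum>x\<in>A. c x * k x) else 0)"

lemma dual_bounded_lincomb:
  assumes "dual_bounded \<phi>" "dual_bounded \<psi>" shows "dual_bounded (\<lambda>k. a * \<phi> k + b * \<psi> k)"
proof -
  obtain C1 where C1: "\<forall>k\<in>lip0. lipnorm k \<le> 1 \<longrightarrow> \<bar>\<phi> k\<bar> \<le> C1" using assms(1) unfolding dual_bounded_def by blast
  obtain C2 where C2: "\<forall>k\<in>lip0. lipnorm k \<le> 1 \<longrightarrow> \<bar>\<psi> k\<bar> \<le> C2" using assms(2) unfolding dual_bounded_def by blast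
  have "\<bar>a * \<phi> k + b * \<psi> k\<bar> \<le> \<bar>a\<bar> * C1 + \<bar>b\<bar> * C2" if "k \<in> lip0" "lipnorm k \<le> 1" for k
  proof -
    have "\<bar>a * \<phi> k + b * \<psi> k\<bar> \<le> \<bar>a\<bar> * \<bar>\<phi> k\<bar> + \<bar>b\<bar> * \<bar>\<psi> k\<bar>" by (simp add: abs_mult[symmetric] abs_triangle_ineq)
    also have "\<dots> \<le> \<bar>a\<bar> * C1 + \<bar>b\<bar> * C2" using C1 C2 that by (intro add_mono mult_left_mono) auto
    finally show ?thesis .
  qed
  then show ?thesis unfolding dual_bounded_def by blast
qed

lemma freesp_lip_linear: "\<phi> \<in> freesp \<Longrightarrow> lip_linear \<phi>"
  unfolding freesp_def lip_linear_def by blast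

lemma freesp_vanishes: "\<phi> \<in> freesp \<Longrightarrow> g \<notin> lip0 \<Longrightarrow> \<phi> g = 0"
  unfolding freesp_def by blast

lemma lip_linear_delta_comb: "lip_linear (delta_comb A c)"
  unfolding lip_linear_def delta_comb_def
  by (auto simp: lip0_lincomb_real sum_distrib_left sum.distrib algebra_simps)

lemma dual_bounded_delta_comb:
  assumes "finite A" shows "dual_bounded (delta_comb A c)"
proof -
  have "\<bar>delta_comb A c k\<bar> \<le> (\<Sum>x\<in>A. \<bar>c x\<bar> * norm x)" if "k \<in> lip0" "lipnorm k \<le> 1" for k
  proof -
    have k0: "k 0 = 0" using that unfolding lip0_def by auto
    have "\<bar>delta_comb A c k\<bar> = \<bar>\<Sum>x\<in>A. c x * k x\<bar>" using that unfolding delta_comb_def by simp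
    also have "\<dots> \<le> (\<Sum>x\<in>A. \<bar>c x * k x\<bar>)" by (rule sum_abs)
    also have "\<dots> \<le> (\<Sum>x\<in>A. \<bar>c x\<bar> * norm x)"
    proof (rule sum_mono)
      fix x
      have "\<bar>k x\<bar> \<le> lipnorm k * norm (x - 0)" using lipnorm_Lipschitz[OF that(1), of x 0] k0 by simp
      also have "\<dots> \<le> norm x" using that(2) mult_right_mono[of "lipnorm k" 1 "norm x"] by simp
      finally show "\<bar>c x * k x\<bar> \<le> \<bar>c x\<bar> * norm x" by (simp add: abs_mult mult_left_mono)
    qed
    finally show ?thesis .
  qed
  then show ?thesis unfolding dual_bounded_def by blast
qed

lemma delta_comb_in_span: "finite A \<Longrightarrow> delta_comb A c \<in> delta_span"
  unfolding delta_span_def delta_comb_def by blast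

lemma delta_spanE:
  assumes "\<phi> \<in> delta_span" obtains A c where "finite A" "\<phi> = delta_comb A c"
  using assms unfolding delta_span_def delta_comb_def by blast

lemma delta_comb_lincomb:
  assumes "finite A" "finite B"
  shows "(\<lambda>k. a * delta_comb A c k + b * delta_comb B d k) =
    delta_comb (A \<union> B) (\<lambda>x. a * (if x \<in> A then c x else 0) + b * (if x \<in> B then d x else 0))"
proof
  fix k
  have 1: "(\<Sum>x\<in>A. c x * k x) = (\<Sum>x\<in>A\<union>B. (if x \<in> A then c x else 0) * k x)"
    using assms by (intro sum.mono_neutral_cong_left) auto
  have 2: "(\<Sum>x\<in>B. d x * k x) = (\<Sum>x\<in>A\<union>B. (if x \<in> B then d x else 0) * k x)"
    using assms by (intro sum.mono_neutral_cong_left) auto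
  show "a * delta_comb A c k + b * delta_comb B d k = delta_comb (A \<union> B) (\<lambda>x. a * (if x \<in> A then c x else 0) + b * (if x \<in> B then d x else 0)) k"
    unfolding delta_comb_def using 1 2
    by (simp add: sum_distrib_left sum.distrib algebra_simps)
qed

lemma delta_span_lincomb:
  assumes "\<phi> \<in> delta_span" "\<psi> \<in> delta_span"
  shows "(\<lambda>k. a * \<phi> k + b * \<psi> k) \<in> delta_span"
proof -
  obtain A c where A: "finite A" "\<phi> = delta_comb A c" using assms(1) by (rule delta_spanE)
  obtain B d where B: "finite B" "\<psi> = delta_comb B d" using assms(2) by (rule delta_spanE)
  show ?thesis using A B delta_comb_lincomb[OF A(1) B(1)] delta_comb_in_span[of "A \<union> B"] by simp
qed

lemma delta_span_dual_bounded: "\<phi> \<in> delta_span \<Longrightarrow> dual_bounded \<phi>"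
  by (metis delta_spanE dual_bounded_delta_comb)

text \<open>
  On the trivial space \<open>lipnorm\<close> is a supremum over the empty set, hence junk; most facts
  about it need a nonzero point.
\<close>
locale nontrivial =
  fixes x0 :: "'a::real_normed_vector"
  assumes x0_nonzero: "x0 \<noteq> 0"
begin

lemma offdiag_ne: "(offdiag :: ('a \<times> 'a) set) \<noteq> {}"
  using x0_nonzero unfolding offdiag_def by auto

lemma lipnorm_le:
  fixes F :: "'a \<Rightarrow> 'c::real_normed_vector"
  assumes "\<And>p q. p \<noteq> q \<Longrightarrow> norm (F p - F q) / norm (p - q) \<le> L"
  shows "lipnorm F \<le> L"
  unfolding lipnorm_def using offdiag_ne assms by (intro cSUP_least) (auto simp: offdiag_def)

lemma less_lipnormE:
  fixes F :: "'a \<Rightarrow> 'c::real_normed_vector"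
  assumes "F \<in> lip0" "t < lipnorm F"
  obtains p q where "p \<noteq> q" "t < norm (F p - F q) / norm (p - q)"
  using assms less_cSUP_iff[OF offdiag_ne bdd_above_slope_norms[OF assms(1)]]
  unfolding lipnorm_def offdiag_def by auto

lemma lipnorm_nonneg:
  fixes F :: "'a \<Rightarrow> 'c::real_normed_vector"
  assumes "F \<in> lip0" shows "0 \<le> lipnorm F"
  using slope_le_lipnorm[OF assms, of x0 0] x0_nonzero by (meson divide_nonneg_nonneg norm_ge_zero order_trans)

lemma lipnorm_zero_le: "lipnorm (\<lambda>_::'a. 0::'c::real_normed_vector) \<le> 0"
  by (rule lipnorm_le) simp

lemma lip0_zero: "(\<lambda>_::'a. 0::'c::real_normed_vector) \<in> lip0"
  by (rule lip0I[where C=0]) auto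

lemma lipnorm_eq_0_imp_zero:
  fixes F :: "'a \<Rightarrow> 'c::real_normed_vector"
  assumes "F \<in> lip0" "lipnorm F = 0" shows "F = (\<lambda>_. 0)"
proof
  fix t
  have "F 0 = 0" using assms unfolding lip0_def by auto
  then show "F t = 0" using lipnorm_Lipschitz[OF assms(1), of t 0] assms(2) by simp
qed

lemma freesp_dual_bounded: "(\<phi> :: ('a \<Rightarrow> real) \<Rightarrow> real) \<in> freesp \<Longrightarrow> dual_bounded \<phi>"
proof -
  assume "\<phi> \<in> freesp"
  then obtain C where C: "\<forall>g\<in>lip0. \<bar>\<phi> g\<bar> \<le> C * lipnorm g" unfolding freesp_def by blast
  have "\<bar>\<phi> k\<bar> \<le> max C 0" if "k \<in> lip0" "lipnorm k \<le> 1" for k :: "'a \<Rightarrow> real"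
  proof -
    have "C * lipnorm k \<le> max C 0 * lipnorm k" using lipnorm_nonneg[OF that(1)] by (intro mult_right_mono) auto
    also have "\<dots> \<le> max C 0 * 1" using that(2) by (intro mult_left_mono) auto
    finally show ?thesis using C that by force
  qed
  then show "dual_bounded \<phi>" unfolding dual_bounded_def by blast
qed

lemma abs_le_dnorm:
  fixes \<phi> :: "('a \<Rightarrow> real) \<Rightarrow> real"
  assumes "dual_bounded \<phi>" "k \<in> lip0" "lipnorm k \<le> 1"
  shows "\<bar>\<phi> k\<bar> \<le> dnorm \<phi>"
proof -
  obtain C where C: "\<forall>k\<in>lip0. lipnorm k \<le> 1 \<longrightarrow> \<bar>\<phi> k\<bar> \<le> C" using assms(1) unfolding dual_bounded_def by blast
  show ?thesis unfolding dnorm_def using assms C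
    by (intro cSUP_upper2[of _ _ k]) (auto intro!: bdd_aboveI2[where M=C])
qed

lemma zero_in_lip_unit_ball: "(\<lambda>_::'a. 0::real) \<in> {g \<in> lip0. lipnorm g \<le> 1}"
proof -
  have "lipnorm (\<lambda>_::'a. 0::real) \<le> 0" by (rule lipnorm_zero_le)
  then show ?thesis using lip0_zero by simp
qed

lemma dnorm_le:
  assumes "\<And>k. k \<in> lip0 \<Longrightarrow> lipnorm k \<le> 1 \<Longrightarrow> \<bar>\<phi> k\<bar> \<le> C"
  shows "dnorm (\<phi> :: ('a \<Rightarrow> real) \<Rightarrow> real) \<le> C"
  unfolding dnorm_def using assms zero_in_lip_unit_ball by (intro cSUP_least) auto

lemma dnorm_nonneg: "dual_bounded (\<phi> :: ('a \<Rightarrow> real) \<Rightarrow> real) \<Longrightarrow> 0 \<le> dnorm \<phi>"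
  using abs_le_dnorm[of \<phi> "\<lambda>_. 0"] zero_in_lip_unit_ball by force

lemma dnorm_le_lincomb:
  fixes \<phi> \<psi>1 \<psi>2 :: "('a \<Rightarrow> real) \<Rightarrow> real"
  assumes "dual_bounded \<psi>1" "dual_bounded \<psi>2" "a \<ge> 0" "b \<ge> 0"
    and "\<And>k. k \<in> lip0 \<Longrightarrow> lipnorm k \<le> 1 \<Longrightarrow> \<bar>\<phi> k\<bar> \<le> a * \<bar>\<psi>1 k\<bar> + b * \<bar>\<psi>2 k\<bar>"
  shows "dnorm (\<phi> :: ('a \<Rightarrow> real) \<Rightarrow> real) \<le> a * dnorm \<psi>1 + b * dnorm \<psi>2"
proof (rule dnorm_le)
  fix k :: "'a \<Rightarrow> real" assume k: "k \<in> lip0" "lipnorm k \<le> 1"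
  have "a * \<bar>\<psi>1 k\<bar> + b * \<bar>\<psi>2 k\<bar> \<le> a * dnorm \<psi>1 + b * dnorm \<psi>2"
    using assms k abs_le_dnorm by (intro add_mono mult_left_mono) auto
  then show "\<bar>\<phi> k\<bar> \<le> a * dnorm \<psi>1 + b * dnorm \<psi>2" using assms(5)[OF k] by linarith
qed

lemma dnorm_lincomb_diff_le:
  fixes \<phi> \<phi>' \<psi> \<psi>' :: "('a \<Rightarrow> real) \<Rightarrow> real"
  assumes "dual_bounded (\<lambda>g. \<phi> g - \<phi>' g)" "dual_bounded (\<lambda>g. \<psi> g - \<psi>' g)"
  shows "dnorm (\<lambda>g. (a * \<phi> g + b * \<psi> g) - (a * \<phi>' g + b * \<psi>' g))
    \<le> \<bar>a\<bar> * dnorm (\<lambda>g. \<phi> g - \<phi>' g) + \<bar>b\<bar> * dnorm (\<lambda>g. \<psi> g - \<psi>' g)"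
proof (rule dnorm_le_lincomb[OF assms])
  fix k
  have "\<bar>(a * \<phi> k + b * \<psi> k) - (a * \<phi>' k + b * \<psi>' k)\<bar> = \<bar>a * (\<phi> k - \<phi>' k) + b * (\<psi> k - \<psi>' k)\<bar>"
    by (simp add: algebra_simps)
  also have "\<dots> \<le> \<bar>a\<bar> * \<bar>\<phi> k - \<phi>' k\<bar> + \<bar>b\<bar> * \<bar>\<psi> k - \<psi>' k\<bar>"
    by (metis abs_mult abs_triangle_ineq)
  finally show "\<bar>(a * \<phi> k + b * \<psi> k) - (a * \<phi>' k + b * \<psi>' k)\<bar>
      \<le> \<bar>a\<bar> * \<bar>\<phi> k - \<phi>' k\<bar> + \<bar>b\<bar> * \<bar>\<psi> k - \<psi>' k\<bar>" .
qed auto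

lemma abs_le_dnorm_mult_lipnorm:
  fixes \<phi> :: "('a \<Rightarrow> real) \<Rightarrow> real"
  assumes "dual_bounded \<phi>" "lip_linear \<phi>" "k \<in> lip0"
  shows "\<bar>\<phi> k\<bar> \<le> dnorm \<phi> * lipnorm k"
proof (cases "lipnorm k = 0")
  case True
  then have k: "k = (\<lambda>_. 0)" using lipnorm_eq_0_imp_zero assms(3) by blast
  have "\<phi> (\<lambda>t. 0 * k t + 0 * k t) = 0 * \<phi> k + 0 * \<phi> k" using assms(2,3) unfolding lip_linear_def by blast
  then have "\<phi> k = 0" using k by simp
  then show ?thesis using True by simp
next
  case False
  define L where "L = lipnorm k"
  have L: "L > 0" using False lipnorm_nonneg[OF assms(3)] L_def by simp
  define k' where "k' = (\<lambda>t. (1/L) * k t + 0 * k t)"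
  have k'l: "k' \<in> lip0" unfolding k'_def using lip0_lincomb_real[OF assms(3) assms(3)] .
  have "lipnorm k' \<le> 1"
  proof (rule lipnorm_le)
    fix p q :: 'a assume "p \<noteq> q"
    have kd: "k' p - k' q = (1/L) * (k p - k q)" unfolding k'_def by (simp add: algebra_simps)
    have "norm (k' p - k' q) / norm (p - q) = (1/L) * (norm (k p - k q) / norm (p - q))"
      unfolding kd using L by (simp add: abs_mult)
    also have "\<dots> \<le> (1/L) * L" using slope_le_lipnorm[OF assms(3) \<open>p \<noteq> q\<close>] L L_def
      by (intro mult_left_mono) auto
    finally show "norm (k' p - k' q) / norm (p - q) \<le> 1" using L by simp
  qed
  then have "\<bar>\<phi> k'\<bar> \<le> dnorm \<phi>" using abs_le_dnorm[OF assms(1) k'l] by simp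
  moreover have "\<phi> k' = (1/L) * \<phi> k + 0 * \<phi> k" using assms(2,3) unfolding lip_linear_def k'_def by blast
  hence "\<phi> k' = (1/L) * \<phi> k" by simp
  ultimately have "(1/L) * \<bar>\<phi> k\<bar> \<le> dnorm \<phi>" using L by (simp add: abs_mult)
  then show ?thesis using L L_def by (simp add: field_simps)
qed

lemma dnorm_zero_le: "dnorm (\<lambda>_::('a \<Rightarrow> real). 0::real) \<le> 0"
  by (rule dnorm_le) simp

lemma delta_comb_freesp: "finite A \<Longrightarrow> delta_comb A c \<in> (freesp :: (('a \<Rightarrow> real) \<Rightarrow> real) set)"
proof -
  assume A: "finite A"
  have "\<forall>g. g \<notin> lip0 \<longrightarrow> delta_comb A c g = 0" unfolding delta_comb_def by simp
  moreover have "\<forall>g\<in>lip0. \<bar>delta_comb A c g\<bar> \<le> dnorm (delta_comb A c) * lipnorm g"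
    using abs_le_dnorm_mult_lipnorm[OF dual_bounded_delta_comb[OF A] lip_linear_delta_comb] by blast
  moreover have "\<forall>e>0. \<exists>\<psi>\<in>delta_span. dnorm (\<lambda>g. delta_comb A c g - \<psi> g) < e"
  proof (intro allI impI)
    fix e :: real assume "e > 0"
    have "dnorm (\<lambda>g. delta_comb A c g - delta_comb A c g) \<le> 0" using dnorm_zero_le by simp
    then show "\<exists>\<psi>\<in>delta_span. dnorm (\<lambda>g. delta_comb A c g - \<psi> g) < e"
      using delta_comb_in_span[OF A, of c] \<open>e > 0\<close> by (intro bexI[of _ "delta_comb A c"]) auto
  qed
  ultimately show ?thesis using lip_linear_delta_comb unfolding freesp_def lip_linear_def by blast
qed

lemma delta_span_freesp: "\<phi> \<in> delta_span \<Longrightarrow> \<phi> \<in> (freesp :: (('a \<Rightarrow> real) \<Rightarrow> real) set)"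
  by (metis delta_spanE delta_comb_freesp)

lemma freesp_lincomb:
  fixes \<phi> \<psi> :: "('a \<Rightarrow> real) \<Rightarrow> real"
  assumes "\<phi> \<in> freesp" "\<psi> \<in> freesp"
  shows "(\<lambda>k. a * \<phi> k + b * \<psi> k) \<in> (freesp :: (('a \<Rightarrow> real) \<Rightarrow> real) set)"
proof -
  let ?\<chi> = "\<lambda>k. a * \<phi> k + b * \<psi> k"
  have van: "\<forall>g. g \<notin> lip0 \<longrightarrow> ?\<chi> g = 0" by (simp add: freesp_vanishes[OF assms(1)] freesp_vanishes[OF assms(2)])
  have lin: "lip_linear ?\<chi>" using freesp_lip_linear[OF assms(1)] freesp_lip_linear[OF assms(2)]
    unfolding lip_linear_def by (simp add: algebra_simps)
  have ub: "dual_bounded ?\<chi>" using dual_bounded_lincomb freesp_dual_bounded assms by blast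
  have bd: "\<forall>g\<in>lip0. \<bar>?\<chi> g\<bar> \<le> dnorm ?\<chi> * lipnorm g" using abs_le_dnorm_mult_lipnorm[OF ub lin] by blast
  have ap: "\<exists>\<psi>'\<in>delta_span. dnorm (\<lambda>g. ?\<chi> g - \<psi>' g) < e" if e: "e > 0" for e
  proof -
    define e' where "e' = e / (\<bar>a\<bar> + \<bar>b\<bar> + 1)"
    have e': "e' > 0" using e unfolding e'_def by (simp add: add_pos_nonneg)
    obtain \<psi>1 where p1: "\<psi>1 \<in> delta_span" "dnorm (\<lambda>g. \<phi> g - \<psi>1 g) < e'" using assms(1) e' unfolding freesp_def by blast
    obtain \<psi>2 where p2: "\<psi>2 \<in> delta_span" "dnorm (\<lambda>g. \<psi> g - \<psi>2 g) < e'" using assms(2) e' unfolding freesp_def by blast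
    have u1: "dual_bounded (\<lambda>g. \<phi> g - \<psi>1 g)" using dual_bounded_lincomb[OF freesp_dual_bounded[OF assms(1)] delta_span_dual_bounded[OF p1(1)], of 1 "-1"] by simp
    have u2: "dual_bounded (\<lambda>g. \<psi> g - \<psi>2 g)" using dual_bounded_lincomb[OF freesp_dual_bounded[OF assms(2)] delta_span_dual_bounded[OF p2(1)], of 1 "-1"] by simp
    have "dnorm (\<lambda>g. ?\<chi> g - (a * \<psi>1 g + b * \<psi>2 g)) \<le> \<bar>a\<bar> * dnorm (\<lambda>g. \<phi> g - \<psi>1 g) + \<bar>b\<bar> * dnorm (\<lambda>g. \<psi> g - \<psi>2 g)"
      by (rule dnorm_lincomb_diff_le[OF u1 u2])
    also have "\<dots> \<le> \<bar>a\<bar> * e' + \<bar>b\<bar> * e'" using p1 p2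
      by (intro add_mono mult_left_mono) auto
    also have "\<dots> = (\<bar>a\<bar> + \<bar>b\<bar>) * e'" by (simp add: algebra_simps)
    also have "\<dots> < (\<bar>a\<bar> + \<bar>b\<bar> + 1) * e'" using e' by (intro mult_strict_right_mono) auto
    also have "\<dots> = e" unfolding e'_def by (simp add: add_pos_nonneg)
    finally show ?thesis using delta_span_lincomb[OF p1(1) p2(1), of a b]
      by (intro bexI[of _ "\<lambda>k. a * \<psi>1 k + b * \<psi>2 k"]) auto
  qed
  show ?thesis unfolding freesp_def using van lin bd ap unfolding lip_linear_def by blast
qed

text \<open>
  Hahn--Banach gives a linear functional below \<open>p\<close> that attains \<open>p\<close> at \<open>\<Sum> c x *\<^sub>R F x\<close>;
  composed with \<open>F\<close> it is a real Lipschitz function, to which \<open>delta_comb A c\<close> is applied.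
\<close>
lemma sublinear_delta_sum_le:
  fixes F :: "'a \<Rightarrow> 'b::real_normed_vector" and p :: "'b \<Rightarrow> real"
  assumes "sublinear p" "\<And>y. p (- y) = p y" "F 0 = 0" "L \<ge> 0"
    "\<And>a b. p (F a - F b) \<le> L * norm (a - b)" "finite A"
  shows "p (\<Sum>x\<in>A. c x *\<^sub>R F x) \<le> L * dnorm (delta_comb A c)"
proof -
  interpret sublinear p by fact
  obtain l where l: "linear l" "\<forall>x. l x \<le> p x" "l (\<Sum>x\<in>A. c x *\<^sub>R F x) = p (\<Sum>x\<in>A. c x *\<^sub>R F x)"
    using hahn_banach by blast
  have labs: "\<bar>l y\<bar> \<le> p y" for y
    using l(2)[rule_format, of y] l(2)[rule_format, of "-y"] linear_neg[OF l(1), of y] assms(2)[of y] by auto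
  define K where "K = (\<lambda>t. l (F t))"
  have Kb: "norm (K a - K b) \<le> L * norm (a - b)" for a b
  proof -
    have "norm (K a - K b) = \<bar>l (F a - F b)\<bar>" unfolding K_def using linear_diff[OF l(1)] by simp
    also have "\<dots> \<le> L * norm (a - b)" using labs assms(5) order_trans by blast
    finally show ?thesis .
  qed
  have K0: "K 0 = 0" unfolding K_def using assms(3) linear_0[OF l(1)] by simp
  have Kl: "K \<in> lip0" using lip0I[OF K0 Kb] .
  have K_le: "lipnorm K \<le> L"
    by (rule lipnorm_le) (use Kb in \<open>simp add: divide_le_eq\<close>)
  have "delta_comb A c K = (\<Sum>x\<in>A. c x * l (F x))" unfolding delta_comb_def K_def using Kl K_def by simp
  also have "\<dots> = l (\<Sum>x\<in>A. c x *\<^sub>R F x)"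
    by (simp add: linear_sum[OF l(1)] linear_scale[OF l(1)])
  finally have eq: "delta_comb A c K = p (\<Sum>x\<in>A. c x *\<^sub>R F x)" using l(3) by simp
  have "\<bar>delta_comb A c K\<bar> \<le> dnorm (delta_comb A c) * lipnorm K"
    using abs_le_dnorm_mult_lipnorm[OF dual_bounded_delta_comb[OF assms(6)] lip_linear_delta_comb Kl] .
  also have "\<dots> \<le> dnorm (delta_comb A c) * L"
    using K_le dnorm_nonneg[OF dual_bounded_delta_comb[OF assms(6)]] by (intro mult_left_mono) auto
  finally show ?thesis using eq by (simp add: mult.commute)
qed

lemma norm_delta_sum_le:
  fixes F :: "'a \<Rightarrow> 'b::real_normed_vector"
  assumes "F \<in> lip0" "finite A"
  shows "norm (\<Sum>x\<in>A. c x *\<^sub>R F x) \<le> lipnorm F * dnorm (delta_comb A c)"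
proof (rule sublinear_delta_sum_le)
  show "sublinear norm" by unfold_locales (auto simp: norm_triangle_ineq)
  show "F 0 = 0" using assms unfolding lip0_def by auto
  show "0 \<le> lipnorm F" using lipnorm_nonneg[OF assms(1)] .
  show "norm (F a - F b) \<le> lipnorm F * norm (a - b)" for a b using lipnorm_Lipschitz[OF assms(1)] .
qed (use assms in auto)

end

section \<open>Linearization of Lipschitz maps\<close>

lemma le_of_le_plus_div_Suc:
  fixes x y C :: real
  assumes "\<And>n. x \<le> y + C / real (Suc n)"
  shows "x \<le> y"
proof -
  have "(\<lambda>n. y + C * inverse (real (Suc n))) \<longlonglongrightarrow> y + C * 0"
    by (intro tendsto_intros LIMSEQ_inverse_real_of_nat)
  then show ?thesis using assms
    by (intro LIMSEQ_le_const[of "\<lambda>n. y + C * inverse (real (Suc n))"]) (auto simp: field_simps)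
qed

lemma sum_restrict_scaleR:
  fixes F :: "'a \<Rightarrow> 'b::real_vector"
  assumes "finite B" "A \<subseteq> B"
  shows "(\<Sum>x\<in>B. (if x \<in> A then c x else 0) *\<^sub>R F x) = (\<Sum>x\<in>A. c x *\<^sub>R F x)"
proof -
  have "(\<Sum>x\<in>A. c x *\<^sub>R F x) = (\<Sum>x\<in>B. (if x \<in> A then c x else 0) *\<^sub>R F x)"
    using assms by (intro sum.mono_neutral_cong_left) auto
  then show ?thesis by simp
qed

lemma sum_union_lincomb_scaleR:
  fixes F :: "'a \<Rightarrow> 'b::real_vector"
  assumes "finite A" "finite B"
  shows "(\<Sum>x\<in>A \<union> B. (a * (if x \<in> A then c x else 0) + b * (if x \<in> B then d x else 0)) *\<^sub>R F x)
    = a *\<^sub>R (\<Sum>x\<in>A. c x *\<^sub>R F x) + b *\<^sub>R (\<Sum>x\<in>B. d x *\<^sub>R F x)"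
proof -
  have "(\<Sum>x\<in>A \<union> B. (a * (if x \<in> A then c x else 0) + b * (if x \<in> B then d x else 0)) *\<^sub>R F x)
     = a *\<^sub>R (\<Sum>x\<in>A \<union> B. (if x \<in> A then c x else 0) *\<^sub>R F x) + b *\<^sub>R (\<Sum>x\<in>A \<union> B. (if x \<in> B then d x else 0) *\<^sub>R F x)"
    by (simp add: scaleR_add_left sum.distrib scaleR_sum_right)
  also have "\<dots> = a *\<^sub>R (\<Sum>x\<in>A. c x *\<^sub>R F x) + b *\<^sub>R (\<Sum>x\<in>B. d x *\<^sub>R F x)"
    using assms by (simp add: sum_restrict_scaleR)
  finally show ?thesis .
qed

definition delta_rep :: "(('a::real_normed_vector \<Rightarrow> real) \<Rightarrow> real) \<Rightarrow> 'a set \<times> ('a \<Rightarrow> real)" where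
  "delta_rep \<psi> = (SOME r. finite (fst r) \<and> \<psi> = delta_comb (fst r) (snd r))"

text \<open>Independent of the chosen representation by \<open>linearize_span_delta_comb\<close>.\<close>
definition linearize_span :: "('a::real_normed_vector \<Rightarrow> 'b::real_normed_vector) \<Rightarrow> (('a \<Rightarrow> real) \<Rightarrow> real) \<Rightarrow> 'b" where
  "linearize_span F \<psi> = (\<Sum>x\<in>fst (delta_rep \<psi>). snd (delta_rep \<psi>) x *\<^sub>R F x)"

definition delta_approx :: "(('a::real_normed_vector \<Rightarrow> real) \<Rightarrow> real) \<Rightarrow> nat \<Rightarrow> (('a \<Rightarrow> real) \<Rightarrow> real)" where
  "delta_approx \<phi> n = (SOME \<psi>. \<psi> \<in> delta_span \<and> dnorm (\<lambda>g. \<phi> g - \<psi> g) < 1 / real (Suc n))"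

text \<open>The limit exists by \<open>linearize_LIMSEQ\<close>; otherwise \<open>lim\<close> would be junk.\<close>
definition linearize :: "('a::real_normed_vector \<Rightarrow> 'b::real_normed_vector) \<Rightarrow> (('a \<Rightarrow> real) \<Rightarrow> real) \<Rightarrow> 'b" where
  "linearize F \<phi> = lim (\<lambda>n. linearize_span F (delta_approx \<phi> n))"

definition molecule :: "'a::real_normed_vector \<Rightarrow> 'a \<Rightarrow> ('a \<Rightarrow> real) \<Rightarrow> real" where
  "molecule p q = delta_comb {p, q} (\<lambda>z. if z = p then 1 / norm (p - q) else - 1 / norm (p - q))"

lemma delta_rep_spec:
  assumes "\<psi> \<in> delta_span" shows "finite (fst (delta_rep \<psi>))" "\<psi> = delta_comb (fst (delta_rep \<psi>)) (snd (delta_rep \<psi>))"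
proof -
  obtain A c where "finite A" "\<psi> = delta_comb A c" using assms by (rule delta_spanE)
  then have "\<exists>r. finite (fst r) \<and> \<psi> = delta_comb (fst r) (snd r)" by (intro exI[of _ "(A,c)"]) simp
  then have "finite (fst (delta_rep \<psi>)) \<and> \<psi> = delta_comb (fst (delta_rep \<psi>)) (snd (delta_rep \<psi>))"
    unfolding delta_rep_def by (rule someI_ex)
  then show "finite (fst (delta_rep \<psi>))" "\<psi> = delta_comb (fst (delta_rep \<psi>)) (snd (delta_rep \<psi>))" by auto
qed

lemma molecule_eq: "molecule p q = (\<lambda>k. if k \<in> lip0 then (k p - k q) / norm (p - q) else 0)" if "p \<noteq> q"
  using that unfolding molecule_def delta_comb_def by (auto simp: diff_divide_distrib)

lemma molecule_in_delta_span: "molecule p q \<in> delta_span"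
  unfolding molecule_def by (rule delta_comb_in_span) simp

context nontrivial
begin

lemma dual_bounded_diff: "dual_bounded \<phi> \<Longrightarrow> dual_bounded \<psi> \<Longrightarrow> dual_bounded (\<lambda>g. \<phi> g - \<psi> g)"
  using dual_bounded_lincomb[of \<phi> \<psi> 1 "-1"] by simp

lemma dnorm_triangle:
  fixes \<phi>1 \<phi>2 \<phi>3 :: "('a \<Rightarrow> real) \<Rightarrow> real"
  assumes "dual_bounded \<phi>1" "dual_bounded \<phi>2" "dual_bounded \<phi>3"
  shows "dnorm (\<lambda>g. \<phi>1 g - \<phi>3 g) \<le> dnorm (\<lambda>g. \<phi>1 g - \<phi>2 g) + dnorm (\<lambda>g. \<phi>2 g - \<phi>3 g)"
  using dnorm_le_lincomb[OF dual_bounded_diff[OF assms(1,2)] dual_bounded_diff[OF assms(2,3)], of 1 1 "\<lambda>g. \<phi>1 g - \<phi>3 g"]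
  by simp

lemma dnorm_commute:
  fixes \<phi>1 \<phi>2 :: "('a \<Rightarrow> real) \<Rightarrow> real"
  assumes "dual_bounded \<phi>1" "dual_bounded \<phi>2"
  shows "dnorm (\<lambda>g. \<phi>2 g - \<phi>1 g) = dnorm (\<lambda>g. \<phi>1 g - \<phi>2 g)"
proof -
  have "dnorm (\<lambda>g. \<phi>2 g - \<phi>1 g) \<le> 1 * dnorm (\<lambda>g. \<phi>1 g - \<phi>2 g) + 0 * dnorm (\<lambda>g. \<phi>1 g - \<phi>2 g)"
    by (rule dnorm_le_lincomb[OF dual_bounded_diff[OF assms(1,2)] dual_bounded_diff[OF assms(1,2)]]) auto
  moreover have "dnorm (\<lambda>g. \<phi>1 g - \<phi>2 g) \<le> 1 * dnorm (\<lambda>g. \<phi>2 g - \<phi>1 g) + 0 * dnorm (\<lambda>g. \<phi>2 g - \<phi>1 g)"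
    by (rule dnorm_le_lincomb[OF dual_bounded_diff[OF assms(2,1)] dual_bounded_diff[OF assms(2,1)]]) auto
  ultimately show ?thesis by simp
qed

lemma delta_approx_spec:
  fixes \<phi> :: "('a \<Rightarrow> real) \<Rightarrow> real"
  assumes "\<phi> \<in> freesp"
  shows "delta_approx \<phi> n \<in> delta_span" "dnorm (\<lambda>g. \<phi> g - delta_approx \<phi> n g) < 1 / real (Suc n)"
proof -
  have pos: "1 / real (Suc n) > 0" by simp
  have "\<exists>\<psi>. \<psi> \<in> delta_span \<and> dnorm (\<lambda>g. \<phi> g - \<psi> g) < 1 / real (Suc n)"
    using assms pos unfolding freesp_def by blast
  then have "delta_approx \<phi> n \<in> delta_span \<and> dnorm (\<lambda>g. \<phi> g - delta_approx \<phi> n g) < 1 / real (Suc n)"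
    unfolding delta_approx_def by (rule someI_ex)
  then show "delta_approx \<phi> n \<in> delta_span" "dnorm (\<lambda>g. \<phi> g - delta_approx \<phi> n g) < 1 / real (Suc n)" by auto
qed

lemma linearize_span_delta_comb:
  fixes F :: "'a \<Rightarrow> 'b::real_normed_vector"
  assumes F: "F \<in> lip0" and A: "finite A"
  shows "linearize_span F (delta_comb A c) = (\<Sum>x\<in>A. c x *\<^sub>R F x)"
proof -
  define B where "B = fst (delta_rep (delta_comb A c))"
  define d where "d = snd (delta_rep (delta_comb A c))"
  have B: "finite B" "delta_comb A c = delta_comb B d" using delta_rep_spec[OF delta_comb_in_span[OF A]] unfolding B_def d_def by auto
  define e where "e = (\<lambda>x. 1 * (if x \<in> B then d x else 0) + (-1) * (if x \<in> A then c x else 0))"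
  have "delta_comb (B \<union> A) e = (\<lambda>k. 1 * delta_comb B d k + (-1) * delta_comb A c k)"
    unfolding e_def by (rule delta_comb_lincomb[OF B(1) A, of 1 d "-1" c, symmetric])
  also have "\<dots> = (\<lambda>k. 0)" using B(2) by simp
  finally have de: "delta_comb (B \<union> A) e = (\<lambda>k. 0)" .
  have "norm (\<Sum>x\<in>B \<union> A. e x *\<^sub>R F x) \<le> lipnorm F * dnorm (delta_comb (B \<union> A) e)"
    using norm_delta_sum_le[OF F] B(1) A by simp
  also have "\<dots> \<le> 0" unfolding de using dnorm_zero_le lipnorm_nonneg[OF F]
    by (simp add: mult_nonneg_nonpos)
  finally have "(\<Sum>x\<in>B \<union> A. e x *\<^sub>R F x) = 0" by simp
  moreover have "(\<Sum>x\<in>B \<union> A. e x *\<^sub>R F x) = 1 *\<^sub>R (\<Sum>x\<in>B. d x *\<^sub>R F x) + (-1) *\<^sub>R (\<Sum>x\<in>A. c x *\<^sub>R F x)"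
    unfolding e_def by (rule sum_union_lincomb_scaleR[OF B(1) A])
  ultimately show ?thesis unfolding linearize_span_def B_def[symmetric] d_def[symmetric] by simp
qed

lemma linearize_span_lincomb:
  fixes F :: "'a \<Rightarrow> 'b::real_normed_vector"
  assumes F: "F \<in> lip0" and "\<psi> \<in> delta_span" "\<psi>' \<in> delta_span"
  shows "linearize_span F (\<lambda>k. a * \<psi> k + b * \<psi>' k) = a *\<^sub>R linearize_span F \<psi> + b *\<^sub>R linearize_span F \<psi>'"
proof -
  obtain A c where A: "finite A" "\<psi> = delta_comb A c" using assms(2) by (rule delta_spanE)
  obtain B d where B: "finite B" "\<psi>' = delta_comb B d" using assms(3) by (rule delta_spanE)
  show ?thesis unfolding A(2) B(2) delta_comb_lincomb[OF A(1) B(1)]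
    using linearize_span_delta_comb[OF F] A(1) B(1) sum_union_lincomb_scaleR[OF A(1) B(1)] by simp
qed

lemma norm_linearize_span_le:
  fixes F :: "'a \<Rightarrow> 'b::real_normed_vector"
  assumes F: "F \<in> lip0" and "\<psi> \<in> delta_span"
  shows "norm (linearize_span F \<psi>) \<le> lipnorm F * dnorm \<psi>"
proof -
  obtain A c where A: "finite A" "\<psi> = delta_comb A c" using assms(2) by (rule delta_spanE)
  show ?thesis unfolding A(2) linearize_span_delta_comb[OF F A(1)] using norm_delta_sum_le[OF F A(1)] .
qed

lemma norm_linearize_span_diff_le:
  fixes F :: "'a \<Rightarrow> 'b::real_normed_vector"
  assumes F: "F \<in> lip0" and "\<psi> \<in> delta_span" "\<psi>' \<in> delta_span"
  shows "norm (linearize_span F \<psi> - linearize_span F \<psi>') \<le> lipnorm F * dnorm (\<lambda>g. \<psi> g - \<psi>' g)"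
proof -
  have "linearize_span F (\<lambda>k. 1 * \<psi> k + (-1) * \<psi>' k) = 1 *\<^sub>R linearize_span F \<psi> + (-1) *\<^sub>R linearize_span F \<psi>'"
    by (rule linearize_span_lincomb[OF assms])
  moreover have "(\<lambda>k. 1 * \<psi> k + (-1) * \<psi>' k) \<in> delta_span" by (rule delta_span_lincomb[OF assms(2,3)])
  ultimately show ?thesis using norm_linearize_span_le[OF F, of "\<lambda>k. 1 * \<psi> k + (-1) * \<psi>' k"] by simp
qed

lemma norm_linearize_span_approx_diff_le:
  fixes F :: "'a \<Rightarrow> 'b::real_normed_vector"
  assumes F: "F \<in> lip0" and \<phi>: "\<phi> \<in> freesp"
  shows "norm (linearize_span F (delta_approx \<phi> n) - linearize_span F (delta_approx \<phi> m)) \<le> lipnorm F * (1 / real (Suc n) + 1 / real (Suc m))"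
proof -
  have u: "dual_bounded (delta_approx \<phi> n)" "dual_bounded (delta_approx \<phi> m)" "dual_bounded \<phi>"
    using delta_approx_spec[OF \<phi>] delta_span_dual_bounded freesp_dual_bounded[OF \<phi>] by auto
  have "dnorm (\<lambda>g. delta_approx \<phi> n g - delta_approx \<phi> m g) \<le> dnorm (\<lambda>g. delta_approx \<phi> n g - \<phi> g) + dnorm (\<lambda>g. \<phi> g - delta_approx \<phi> m g)"
    by (rule dnorm_triangle[OF u(1) u(3) u(2)])
  also have "\<dots> = dnorm (\<lambda>g. \<phi> g - delta_approx \<phi> n g) + dnorm (\<lambda>g. \<phi> g - delta_approx \<phi> m g)"
    using dnorm_commute[OF u(3) u(1)] by simp
  also have "\<dots> \<le> 1 / real (Suc n) + 1 / real (Suc m)" using delta_approx_spec(2)[OF \<phi>] by (intro add_mono) (auto intro: less_imp_le)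
  finally have "dnorm (\<lambda>g. delta_approx \<phi> n g - delta_approx \<phi> m g) \<le> 1 / real (Suc n) + 1 / real (Suc m)" .
  then show ?thesis using norm_linearize_span_diff_le[OF F delta_approx_spec(1)[OF \<phi>] delta_approx_spec(1)[OF \<phi>], of n m] lipnorm_nonneg[OF F]
    by (meson mult_left_mono order_trans)
qed

lemma linearize_LIMSEQ:
  fixes F :: "'a \<Rightarrow> 'b::banach"
  assumes F: "F \<in> lip0" and \<phi>: "\<phi> \<in> freesp"
  shows "(\<lambda>n. linearize_span F (delta_approx \<phi> n)) \<longlonglongrightarrow> linearize F \<phi>"
proof -
  let ?L = "lipnorm F"
  have L: "?L \<ge> 0" using lipnorm_nonneg[OF F] .
  have "Cauchy (\<lambda>n. linearize_span F (delta_approx \<phi> n))"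
  proof (rule metric_CauchyI)
    fix e :: real assume e: "e > 0"
    obtain M :: nat where M: "2 * (?L + 1) / e < real M" using reals_Archimedean2 by blast
    have "dist (linearize_span F (delta_approx \<phi> m)) (linearize_span F (delta_approx \<phi> n)) < e" if "m \<ge> M" "n \<ge> M" for m n
    proof -
      have "2 * (?L + 1) / e > 0" using e L by simp
      then have Mpos: "real M > 0" using M by linarith
      have "1 / real (Suc m) \<le> 1 / real M" using that Mpos by (intro divide_left_mono) auto
      moreover have "1 / real (Suc n) \<le> 1 / real M" using that Mpos by (intro divide_left_mono) auto
      ultimately have s: "1 / real (Suc m) + 1 / real (Suc n) \<le> 2 / real M" by simp
      have "dist (linearize_span F (delta_approx \<phi> m)) (linearize_span F (delta_approx \<phi> n)) \<le> ?L * (1 / real (Suc m) + 1 / real (Suc n))"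
        unfolding dist_norm by (rule norm_linearize_span_approx_diff_le[OF F \<phi>])
      also have "\<dots> \<le> (?L + 1) * (2 / real M)" using s L by (intro mult_mono) auto
      also have "\<dots> < e" using M Mpos e L by (simp add: field_simps)
      finally show ?thesis .
    qed
    then show "\<exists>M. \<forall>m\<ge>M. \<forall>n\<ge>M. dist (linearize_span F (delta_approx \<phi> m)) (linearize_span F (delta_approx \<phi> n)) < e" by blast
  qed
  then obtain l where l: "(\<lambda>n. linearize_span F (delta_approx \<phi> n)) \<longlonglongrightarrow> l" using convergent_eq_Cauchy by blast
  then show ?thesis unfolding linearize_def using limI[OF l] by simp
qed

lemma norm_linearize_approx_le:
  fixes F :: "'a \<Rightarrow> 'b::banach"
  assumes F: "F \<in> lip0" and \<phi>: "\<phi> \<in> freesp"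
  shows "norm (linearize F \<phi> - linearize_span F (delta_approx \<phi> n)) \<le> lipnorm F * (2 / real (Suc n))"
proof -
  have "(\<lambda>m. norm (linearize_span F (delta_approx \<phi> m) - linearize_span F (delta_approx \<phi> n))) \<longlonglongrightarrow> norm (linearize F \<phi> - linearize_span F (delta_approx \<phi> n))"
    by (intro tendsto_intros linearize_LIMSEQ[OF F \<phi>])
  moreover have "\<exists>N. \<forall>m\<ge>N. norm (linearize_span F (delta_approx \<phi> m) - linearize_span F (delta_approx \<phi> n)) \<le> lipnorm F * (2 / real (Suc n))"
  proof (intro exI allI impI)
    fix m assume "m \<ge> n"
    then have "1 / real (Suc m) \<le> 1 / real (Suc n)" by (intro divide_left_mono) auto
    then have "lipnorm F * (1 / real (Suc m) + 1 / real (Suc n)) \<le> lipnorm F * (2 / real (Suc n))"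
      using lipnorm_nonneg[OF F] by (intro mult_left_mono) auto
    then show "norm (linearize_span F (delta_approx \<phi> m) - linearize_span F (delta_approx \<phi> n)) \<le> lipnorm F * (2 / real (Suc n))"
      using norm_linearize_span_approx_diff_le[OF F \<phi>, of m n] by linarith
  qed
  ultimately show ?thesis by (rule LIMSEQ_le_const2)
qed

lemma norm_linearize_diff_le:
  fixes F :: "'a \<Rightarrow> 'b::banach"
  assumes F: "F \<in> lip0" and \<phi>: "\<phi> \<in> freesp" and \<psi>: "\<psi> \<in> delta_span"
  shows "norm (linearize F \<phi> - linearize_span F \<psi>) \<le> lipnorm F * dnorm (\<lambda>g. \<phi> g - \<psi> g)"
proof (rule le_of_le_plus_div_Suc[where C = "3 * lipnorm F"])
  fix n
  let ?L = "lipnorm F"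
  have L: "?L \<ge> 0" using lipnorm_nonneg[OF F] .
  have u: "dual_bounded (delta_approx \<phi> n)" "dual_bounded \<phi>" "dual_bounded \<psi>"
    using delta_approx_spec[OF \<phi>] delta_span_dual_bounded freesp_dual_bounded[OF \<phi>] \<psi> by auto
  have "dnorm (\<lambda>g. delta_approx \<phi> n g - \<psi> g) \<le> dnorm (\<lambda>g. delta_approx \<phi> n g - \<phi> g) + dnorm (\<lambda>g. \<phi> g - \<psi> g)"
    by (rule dnorm_triangle[OF u(1) u(2) u(3)])
  also have "\<dots> \<le> 1 / real (Suc n) + dnorm (\<lambda>g. \<phi> g - \<psi> g)"
    using dnorm_commute[OF u(2) u(1)] delta_approx_spec(2)[OF \<phi>, of n] by simp
  finally have d: "dnorm (\<lambda>g. delta_approx \<phi> n g - \<psi> g) \<le> 1 / real (Suc n) + dnorm (\<lambda>g. \<phi> g - \<psi> g)" .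
  have "norm (linearize F \<phi> - linearize_span F \<psi>) \<le> norm (linearize F \<phi> - linearize_span F (delta_approx \<phi> n)) + norm (linearize_span F (delta_approx \<phi> n) - linearize_span F \<psi>)"
    using norm_triangle_ineq[of "linearize F \<phi> - linearize_span F (delta_approx \<phi> n)" "linearize_span F (delta_approx \<phi> n) - linearize_span F \<psi>"] by simp
  also have "\<dots> \<le> ?L * (2 / real (Suc n)) + ?L * (1 / real (Suc n) + dnorm (\<lambda>g. \<phi> g - \<psi> g))"
    using norm_linearize_approx_le[OF F \<phi>, of n] norm_linearize_span_diff_le[OF F delta_approx_spec(1)[OF \<phi>] \<psi>, of n] mult_left_mono[OF d L]
    by linarith
  also have "\<dots> = ?L * dnorm (\<lambda>g. \<phi> g - \<psi> g) + 3 * ?L / real (Suc n)"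
    by (simp add: divide_inverse algebra_simps)
  finally show "norm (linearize F \<phi> - linearize_span F \<psi>) \<le> ?L * dnorm (\<lambda>g. \<phi> g - \<psi> g) + 3 * ?L / real (Suc n)" .
qed

lemma linearize_eq_linearize_span:
  fixes F :: "'a \<Rightarrow> 'b::banach"
  assumes F: "F \<in> lip0" and \<psi>: "\<psi> \<in> delta_span"
  shows "linearize F \<psi> = linearize_span F \<psi>"
proof -
  have "dnorm (\<lambda>g. \<psi> g - \<psi> g) \<le> 0" using dnorm_zero_le by simp
  then have "norm (linearize F \<psi> - linearize_span F \<psi>) \<le> 0"
    using norm_linearize_diff_le[OF F delta_span_freesp[OF \<psi>] \<psi>] lipnorm_nonneg[OF F]
    by (meson mult_nonneg_nonpos order_trans)
  then show ?thesis by simp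
qed

lemma norm_linearize_le:
  fixes F :: "'a \<Rightarrow> 'b::banach"
  assumes F: "F \<in> lip0" and \<phi>: "\<phi> \<in> freesp"
  shows "norm (linearize F \<phi>) \<le> lipnorm F * dnorm \<phi>"
proof -
  have z: "delta_comb {} (\<lambda>_. 0) \<in> delta_span" by (rule delta_comb_in_span) simp
  have "linearize_span F (delta_comb {} (\<lambda>_. 0)) = 0" using linearize_span_delta_comb[OF F, of "{}"] by simp
  moreover have "(\<lambda>g. \<phi> g - delta_comb {} (\<lambda>_. 0) g) = \<phi>" by (rule ext) (simp add: delta_comb_def)
  ultimately show ?thesis using norm_linearize_diff_le[OF F \<phi> z] by simp
qed

lemma linearize_lincomb:
  fixes F :: "'a \<Rightarrow> 'b::banach"
  assumes F: "F \<in> lip0" and \<phi>: "\<phi> \<in> freesp" and \<psi>: "\<psi> \<in> freesp"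
  shows "linearize F (\<lambda>k. a * \<phi> k + b * \<psi> k) = a *\<^sub>R linearize F \<phi> + b *\<^sub>R linearize F \<psi>"
proof -
  let ?L = "lipnorm F"
  let ?\<chi> = "\<lambda>k. a * \<phi> k + b * \<psi> k"
  have L: "?L \<ge> 0" using lipnorm_nonneg[OF F] .
  have \<chi>: "?\<chi> \<in> freesp" by (rule freesp_lincomb[OF \<phi> \<psi>])
  have "norm (linearize F ?\<chi> - (a *\<^sub>R linearize F \<phi> + b *\<^sub>R linearize F \<psi>)) \<le> 0"
  proof (rule le_of_le_plus_div_Suc[where C = "3 * ?L * (\<bar>a\<bar> + \<bar>b\<bar>)"])
    fix n
    let ?p = "delta_approx \<phi> n" and ?q = "delta_approx \<psi> n"
    let ?c = "\<lambda>k. a * ?p k + b * ?q k"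
    have pq: "?p \<in> delta_span" "?q \<in> delta_span" using delta_approx_spec(1) \<phi> \<psi> by auto
    have c: "?c \<in> delta_span" by (rule delta_span_lincomb[OF pq])
    have u1: "dual_bounded (\<lambda>g. \<phi> g - ?p g)" using dual_bounded_diff freesp_dual_bounded[OF \<phi>] delta_span_dual_bounded[OF pq(1)] by blast
    have u2: "dual_bounded (\<lambda>g. \<psi> g - ?q g)" using dual_bounded_diff freesp_dual_bounded[OF \<psi>] delta_span_dual_bounded[OF pq(2)] by blast
    have "dnorm (\<lambda>g. ?\<chi> g - ?c g) \<le> \<bar>a\<bar> * dnorm (\<lambda>g. \<phi> g - ?p g) + \<bar>b\<bar> * dnorm (\<lambda>g. \<psi> g - ?q g)"
      by (rule dnorm_lincomb_diff_le[OF u1 u2])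
    also have "\<dots> \<le> \<bar>a\<bar> * (1 / real (Suc n)) + \<bar>b\<bar> * (1 / real (Suc n))"
      using delta_approx_spec(2)[OF \<phi>, of n] delta_approx_spec(2)[OF \<psi>, of n] by (intro add_mono mult_left_mono) auto
    also have "\<dots> = (\<bar>a\<bar> + \<bar>b\<bar>) / real (Suc n)" by (simp add: add_divide_distrib)
    finally have d: "dnorm (\<lambda>g. ?\<chi> g - ?c g) \<le> (\<bar>a\<bar> + \<bar>b\<bar>) / real (Suc n)" .
    have 1: "norm (linearize F ?\<chi> - linearize_span F ?c) \<le> ?L * ((\<bar>a\<bar> + \<bar>b\<bar>) / real (Suc n))"
      using norm_linearize_diff_le[OF F \<chi> c] mult_left_mono[OF d L] by linarith
    have Tc: "linearize_span F ?c = a *\<^sub>R linearize_span F ?p + b *\<^sub>R linearize_span F ?q" by (rule linearize_span_lincomb[OF F pq])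
    have "norm (linearize_span F ?c - (a *\<^sub>R linearize F \<phi> + b *\<^sub>R linearize F \<psi>)) = norm (a *\<^sub>R (linearize_span F ?p - linearize F \<phi>) + b *\<^sub>R (linearize_span F ?q - linearize F \<psi>))"
      unfolding Tc by (simp add: algebra_simps)
    also have "\<dots> \<le> \<bar>a\<bar> * norm (linearize_span F ?p - linearize F \<phi>) + \<bar>b\<bar> * norm (linearize_span F ?q - linearize F \<psi>)"
      by (metis norm_scaleR norm_triangle_ineq)
    also have "\<dots> \<le> \<bar>a\<bar> * (?L * (2 / real (Suc n))) + \<bar>b\<bar> * (?L * (2 / real (Suc n)))"
      using norm_linearize_approx_le[OF F \<phi>, of n] norm_linearize_approx_le[OF F \<psi>, of n]
      by (intro add_mono mult_left_mono) (auto simp: norm_minus_commute)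
    finally have 2: "norm (linearize_span F ?c - (a *\<^sub>R linearize F \<phi> + b *\<^sub>R linearize F \<psi>)) \<le> \<bar>a\<bar> * (?L * (2 / real (Suc n))) + \<bar>b\<bar> * (?L * (2 / real (Suc n)))" .
    have "norm (linearize F ?\<chi> - (a *\<^sub>R linearize F \<phi> + b *\<^sub>R linearize F \<psi>)) \<le> norm (linearize F ?\<chi> - linearize_span F ?c) + norm (linearize_span F ?c - (a *\<^sub>R linearize F \<phi> + b *\<^sub>R linearize F \<psi>))"
      using dist_triangle[of "linearize F ?\<chi>" "a *\<^sub>R linearize F \<phi> + b *\<^sub>R linearize F \<psi>" "linearize_span F ?c"] unfolding dist_norm .
    also have "\<dots> \<le> ?L * ((\<bar>a\<bar> + \<bar>b\<bar>) / real (Suc n)) + (\<bar>a\<bar> * (?L * (2 / real (Suc n))) + \<bar>b\<bar> * (?L * (2 / real (Suc n))))"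
      using 1 2 by linarith
    also have "\<dots> = 0 + 3 * ?L * (\<bar>a\<bar> + \<bar>b\<bar>) / real (Suc n)" by (simp add: divide_inverse algebra_simps)
    finally show "norm (linearize F ?\<chi> - (a *\<^sub>R linearize F \<phi> + b *\<^sub>R linearize F \<psi>)) \<le> 0 + 3 * ?L * (\<bar>a\<bar> + \<bar>b\<bar>) / real (Suc n)" .
  qed
  then show ?thesis by simp
qed

lemma linearize_span_molecule:
  fixes F :: "'a \<Rightarrow> 'b::real_normed_vector"
  assumes F: "F \<in> lip0" and pq: "p \<noteq> q"
  shows "linearize_span F (molecule p q) = (F p - F q) /\<^sub>R norm (p - q)"
  unfolding molecule_def using linearize_span_delta_comb[OF F, of "{p,q}"] pq
  by (simp add: scaleR_diff_right divide_inverse_commute[symmetric] scaleR_left_diff_distrib)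
     (simp add: field_simps)

lemma dnorm_molecule_le: "dnorm (molecule (p::'a) q) \<le> 1"
proof (cases "p = q")
  case True
  then have "molecule p q = (\<lambda>k. 0)" unfolding molecule_def delta_comb_def by auto
  then show ?thesis using dnorm_zero_le by simp
next
  case False
  show ?thesis
  proof (rule dnorm_le)
    fix k :: "'a \<Rightarrow> real" assume k: "k \<in> lip0" "lipnorm k \<le> 1"
    have "\<bar>molecule p q k\<bar> = norm (k p - k q) / norm (p - q)" using k False by (simp add: molecule_eq)
    also have "\<dots> \<le> 1" using slope_le_lipnorm[OF k(1) False] k(2) by linarith
    finally show "\<bar>molecule p q k\<bar> \<le> 1" .
  qed
qed

lemma dnorm_molecule_ge:
  assumes pq: "(p::'a) \<noteq> q" shows "1 \<le> dnorm (molecule p q)"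
proof -
  define k where "k = (\<lambda>t::'a. norm (t - q) - norm q)"
  have kb: "norm (k a - k b) \<le> 1 * norm (a - b)" for a b
    unfolding k_def using norm_triangle_ineq3[of "a - q" "b - q"] by simp
  have kl: "k \<in> lip0" by (rule lip0I[OF _ kb]) (simp add: k_def)
  have kn: "lipnorm k \<le> 1" by (rule lipnorm_le) (use kb in \<open>simp add: divide_le_eq\<close>)
  have "molecule p q k = 1" using pq kl by (simp add: molecule_eq k_def)
  then show ?thesis using abs_le_dnorm[OF delta_span_dual_bounded[OF molecule_in_delta_span[of p q]] kl kn] by simp
qed

lemma molecule_freesp: "molecule p q \<in> (freesp :: (('a \<Rightarrow> real) \<Rightarrow> real) set)"
  by (rule delta_span_freesp[OF molecule_in_delta_span])

lemma molecule_dnorm_le: "molecule (p::'a) q \<in> {\<phi> \<in> freesp. dnorm \<phi> \<le> 1}"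
  using molecule_freesp dnorm_molecule_le by blast

lemma dnorm_molecule: "p \<noteq> q \<Longrightarrow> dnorm (molecule (p::'a) q) = 1"
  using dnorm_molecule_le dnorm_molecule_ge by (simp add: antisym)

lemma linearize_molecule:
  fixes F :: "'a \<Rightarrow> 'b::banach"
  assumes "F \<in> lip0" "p \<noteq> q"
  shows "linearize F (molecule p q) = (F p - F q) /\<^sub>R norm (p - q)"
  using linearize_eq_linearize_span[OF assms(1) molecule_in_delta_span]
    linearize_span_molecule[OF assms] by simp

end

section \<open>Finite-dimensional subspaces and the distance to them\<close>

lemma closed_if_compact_Int_cball:
  fixes E :: "'b::real_normed_vector set"
  assumes "\<And>R. compact (E \<inter> cball 0 R)"
  shows "closed E"
proof -
  have "x \<in> E" if "x \<in> closure E" for x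
  proof -
    have "\<exists>s. (\<forall>n. s n \<in> E) \<and> s \<longlonglongrightarrow> x" using that unfolding closure_sequential .
    then obtain s where s: "\<forall>n. s n \<in> E" "s \<longlonglongrightarrow> x" by blast
    have "(\<lambda>n. norm (s n)) \<longlonglongrightarrow> norm x" by (rule tendsto_norm[OF s(2)])
    then have "\<forall>\<^sub>F n in sequentially. norm (s n) < norm x + 1"
      by (rule order_tendstoD(2)) simp
    then have ev: "\<forall>\<^sub>F n in sequentially. s n \<in> E \<inter> cball 0 (norm x + 1)"
      by (rule eventually_mono) (use s(1) in auto)
    have "x \<in> E \<inter> cball 0 (norm x + 1)"
      by (rule Lim_in_closed_set[OF compact_imp_closed[OF assms] ev _ s(2)]) simp
    then show ?thesis by simp
  qed
  then have "closure E \<subseteq> E" by blast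
  then show ?thesis by (simp only: closure_subset_eq)
qed

lemma abs_mult_infdist_le:
  fixes y :: "'b::real_normed_vector"
  assumes E: "subspace E" and e: "e \<in> E"
  shows "\<bar>t\<bar> * infdist y E \<le> norm (e + t *\<^sub>R y)"
proof (cases "t = 0")
  case False
  have "- (1/t) *\<^sub>R e \<in> E" using E e by (rule subspace_scale)
  then have "infdist y E \<le> dist y (- (1/t) *\<^sub>R e)" by (rule infdist_le)
  also have "\<dots> = norm ((1/t) *\<^sub>R (e + t *\<^sub>R y))"
    unfolding dist_norm using False by (simp add: algebra_simps)
  also have "\<dots> = norm (e + t *\<^sub>R y) / \<bar>t\<bar>" by simp
  finally show ?thesis using False by (simp add: field_simps)
qed simp

lemma compact_span_insert_Int_cball:
  fixes y :: "'b::real_normed_vector"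
  assumes compact: "\<And>R. compact (span Ys \<inter> cball 0 R)" and y: "y \<notin> span Ys"
  shows "compact (span (insert y Ys) \<inter> cball 0 R)"
proof -
  define d where "d = infdist y (span Ys)"
  have "closed (span Ys)" using compact by (rule closed_if_compact_Int_cball)
  then have d: "0 < d" unfolding d_def using infdist_pos_not_in_closed y span_zero by blast
  define K where "K = (span Ys \<inter> cball 0 (R + \<bar>R\<bar> / d * norm y)) \<times> {-\<bar>R\<bar>/d .. \<bar>R\<bar>/d}"
  define f where "f = (\<lambda>z::'b \<times> real. fst z + snd z *\<^sub>R y)"
  have "compact (f ` K)"
    unfolding K_def f_def using compact by (intro compact_continuous_image continuous_intros compact_Times) auto
  moreover have "span (insert y Ys) \<inter> cball 0 R = f ` K \<inter> cball 0 R"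
  proof
    show "span (insert y Ys) \<inter> cball 0 R \<subseteq> f ` K \<inter> cball 0 R"
    proof
      fix z assume z: "z \<in> span (insert y Ys) \<inter> cball 0 R"
      then obtain t where e: "z - t *\<^sub>R y \<in> span Ys" unfolding span_insert by auto
      have "\<bar>t\<bar> * d \<le> norm z" using abs_mult_infdist_le[OF subspace_span e, of t y] unfolding d_def by simp
      moreover have "norm z \<le> R" using z by simp
      ultimately have "\<bar>t\<bar> * d \<le> \<bar>R\<bar>" by linarith
      then have t: "\<bar>t\<bar> \<le> \<bar>R\<bar> / d" using d by (simp add: field_simps)
      have "norm (z - t *\<^sub>R y) \<le> norm z + \<bar>t\<bar> * norm y"
        using norm_triangle_ineq4[of z "t *\<^sub>R y"] by simp
      also have "\<dots> \<le> R + \<bar>R\<bar> / d * norm y" using z t by (intro add_mono mult_right_mono) auto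
      finally have "(z - t *\<^sub>R y, t) \<in> K" unfolding K_def using e t by auto
      then show "z \<in> f ` K \<inter> cball 0 R" using z unfolding f_def by force
    qed
    have "e + t *\<^sub>R y \<in> span (insert y Ys)" if "e \<in> span Ys" for e t
      by (rule span_add[OF span_mono[THEN subsetD, OF subset_insertI that] span_scale[OF span_base[OF insertI1]]])
    then show "f ` K \<inter> cball 0 R \<subseteq> span (insert y Ys) \<inter> cball 0 R"
      unfolding K_def f_def by auto
  qed
  ultimately show ?thesis by (metis compact_Int_closed closed_cball)
qed

lemma compact_span_Int_cball:
  fixes Ys :: "'b::real_normed_vector set"
  assumes "finite Ys"
  shows "compact (span Ys \<inter> cball 0 R)"
  using assms
proof (induction Ys arbitrary: R rule: finite_induct)
  case empty
  then show ?case by (simp add: span_empty finite_imp_compact)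
next
  case (insert y Ys)
  then show ?case
    by (cases "y \<in> span Ys") (auto simp: span_redundant intro: compact_span_insert_Int_cball)
qed

lemma infdist_scale_le:
  fixes E :: "'b::real_normed_vector set"
  assumes "subspace E"
  shows "infdist (c *\<^sub>R y) E \<le> \<bar>c\<bar> * infdist y E"
proof (cases "c = 0")
  case True
  then show ?thesis using infdist_zero[OF subspace_0[OF assms]] by simp
next
  case False
  have ne: "E \<noteq> {}" using subspace_0[OF assms] by blast
  have "infdist (c *\<^sub>R y) E / \<bar>c\<bar> \<le> dist y e" if "e \<in> E" for e
  proof -
    have "c *\<^sub>R e \<in> E" using assms that by (rule subspace_scale)
    then have "infdist (c *\<^sub>R y) E \<le> dist (c *\<^sub>R y) (c *\<^sub>R e)" by (rule infdist_le)
    also have "\<dots> = \<bar>c\<bar> * dist y e" unfolding dist_norm by (simp flip: scaleR_diff_right)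
    finally show ?thesis using False by (simp add: field_simps)
  qed
  then have "infdist (c *\<^sub>R y) E / \<bar>c\<bar> \<le> infdist y E"
    unfolding infdist_notempty[OF ne] using ne by (intro cINF_greatest) auto
  then show ?thesis using False by (simp add: field_simps)
qed

lemma infdist_add_le:
  fixes E :: "'b::real_normed_vector set"
  assumes "subspace E"
  shows "infdist (y1 + y2) E \<le> infdist y1 E + infdist y2 E"
proof -
  have ne: "E \<noteq> {}" using subspace_0[OF assms] by blast
  have "infdist (y1 + y2) E - dist y2 e2 \<le> dist y1 e1" if "e1 \<in> E" "e2 \<in> E" for e1 e2
  proof -
    have "e1 + e2 \<in> E" using assms that by (rule subspace_add)
    then have "infdist (y1 + y2) E \<le> dist (y1 + y2) (e1 + e2)" by (rule infdist_le)
    also have "\<dots> \<le> dist y1 e1 + dist y2 e2" unfolding dist_norm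
      using norm_triangle_ineq[of "y1 - e1" "y2 - e2"] by (simp add: algebra_simps)
    finally show ?thesis by simp
  qed
  then have "infdist (y1 + y2) E - dist y2 e2 \<le> infdist y1 E" if "e2 \<in> E" for e2
    unfolding infdist_notempty[OF ne, of y1] using ne that by (intro cINF_greatest) auto
  then have "infdist (y1 + y2) E - infdist y1 E \<le> dist y2 e2" if "e2 \<in> E" for e2
    using that by force
  then have "infdist (y1 + y2) E - infdist y1 E \<le> infdist y2 E"
    unfolding infdist_notempty[OF ne, of y2] using ne by (intro cINF_greatest) auto
  then show ?thesis by simp
qed

lemma sublinear_infdist:
  fixes E :: "'b::real_normed_vector set"
  assumes "subspace E"
  shows "sublinear (\<lambda>y. infdist y E)"
proof
  fix x y :: 'b show "infdist (x + y) E \<le> infdist x E + infdist y E" by (rule infdist_add_le[OF assms])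
next
  fix c :: real and x :: 'b assume c: "c \<ge> 0"
  show "infdist (c *\<^sub>R x) E = c * infdist x E"
  proof (cases "c = 0")
    case True then show ?thesis using infdist_zero[OF subspace_0[OF assms]] by simp
  next
    case False
    have 1: "infdist (c *\<^sub>R x) E \<le> c * infdist x E" using infdist_scale_le[OF assms, of c x] c by simp
    have "infdist ((1/c) *\<^sub>R (c *\<^sub>R x)) E \<le> (1/c) * infdist (c *\<^sub>R x) E"
      using infdist_scale_le[OF assms, of "1/c" "c *\<^sub>R x"] c by simp
    then have "infdist x E \<le> (1/c) * infdist (c *\<^sub>R x) E" using False by simp
    then have 2: "c * infdist x E \<le> infdist (c *\<^sub>R x) E" using c False by (simp add: field_simps)
    show ?thesis using 1 2 by simp
  qed
qed

lemma infdist_uminus_subspace: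
  fixes E :: "'b::real_normed_vector set"
  assumes "subspace E"
  shows "infdist (- y) E = infdist y E"
  using infdist_scale_le[OF assms, of "-1" y] infdist_scale_le[OF assms, of "-1" "-y"] by simp

lemma infdist_lessE:
  assumes "A \<noteq> {}" "infdist u A < d"
  obtains e where "e \<in> A" "dist u e < d"
proof -
  have "Inf (dist u ` A) < d" using assms infdist_notempty by metis
  then have "\<exists>x\<in>dist u ` A. x < d" using assms(1)
    by (subst (asm) cInf_less_iff) (auto intro: bdd_belowI[where m=0])
  then show ?thesis using that by blast
qed

section \<open>Compactness of the linearization\<close>

lemma infdist_diff_le_slopes:
  fixes F :: "'a::real_normed_vector \<Rightarrow> 'b::real_normed_vector"
  assumes E: "subspace E" and slopes: "\<And>s. s \<in> slopes F \<Longrightarrow> infdist s E \<le> r"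
  shows "infdist (F a - F b) E \<le> r * norm (a - b)"
proof (cases "a = b")
  case True
  then show ?thesis using infdist_zero[OF subspace_0[OF E]] by simp
next
  case False
  let ?s = "(F a - F b) /\<^sub>R norm (a - b)"
  have "?s \<in> slopes F" unfolding slopes_def using False by blast
  have "infdist (F a - F b) E = infdist (norm (a - b) *\<^sub>R ?s) E" using False by simp
  also have "\<dots> = norm (a - b) * infdist ?s E"
    by (rule sublinear.pos_homogeneous[OF sublinear_infdist[OF E]]) simp
  also have "\<dots> \<le> norm (a - b) * r" using slopes[OF \<open>?s \<in> slopes F\<close>] by (intro mult_left_mono) auto
  finally show ?thesis by (simp add: mult.commute)
qed

context nontrivial
begin

lemma infdist_linearize_le:
  fixes F :: "'a \<Rightarrow> 'b::banach"
  assumes F: "F \<in> lip0" and E: "subspace E" and r: "0 \<le> r"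
    and slopes: "\<And>a b. infdist (F a - F b) E \<le> r * norm (a - b)" and \<phi>: "\<phi> \<in> freesp"
  shows "infdist (linearize F \<phi>) E \<le> r * dnorm \<phi>"
proof (rule le_of_le_plus_div_Suc[where C = "r + lipnorm F"])
  fix n
  let ?p = "delta_approx \<phi> n"
  have p: "?p \<in> delta_span" "dnorm (\<lambda>g. \<phi> g - ?p g) < 1 / real (Suc n)"
    using delta_approx_spec[OF \<phi>] by auto
  have bounded: "dual_bounded \<phi>" "dual_bounded (\<lambda>g. \<phi> g - ?p g)"
    using freesp_dual_bounded[OF \<phi>] dual_bounded_diff delta_span_dual_bounded[OF p(1)] by blast+
  obtain A c where A: "finite A" "?p = delta_comb A c" using p(1) by (rule delta_spanE)
  have "infdist (linearize_span F ?p) E \<le> r * dnorm ?p"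
    using sublinear_delta_sum_le[OF sublinear_infdist[OF E] infdist_uminus_subspace[OF E] _ r slopes A(1)] F
    unfolding A(2) linearize_span_delta_comb[OF F A(1)] lip0_def by simp
  also have "\<dots> \<le> r * (dnorm \<phi> + 1 / real (Suc n))"
  proof -
    have "dnorm ?p \<le> 1 * dnorm \<phi> + 1 * dnorm (\<lambda>g. \<phi> g - ?p g)"
      by (rule dnorm_le_lincomb[OF bounded]) auto
    then show ?thesis using p(2) r by (intro mult_left_mono) auto
  qed
  finally have near: "infdist (linearize_span F ?p) E \<le> r * (dnorm \<phi> + 1 / real (Suc n))" .
  have "dist (linearize F \<phi>) (linearize_span F ?p) \<le> lipnorm F * (1 / real (Suc n))"
    unfolding dist_norm using norm_linearize_diff_le[OF F \<phi> p(1)] p(2) lipnorm_nonneg[OF F]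
    by (meson less_imp_le mult_left_mono order_trans)
  with near infdist_triangle[of "linearize F \<phi>" E "linearize_span F ?p"]
  show "infdist (linearize F \<phi>) E \<le> r * dnorm \<phi> + (r + lipnorm F) / real (Suc n)"
    by (simp add: distrib_left add_divide_distrib)
qed

lemma compact_linearize_image:
  fixes F :: "'a \<Rightarrow> 'b::banach"
  assumes F: "F \<in> lip0" and K: "compact (closure (slopes F))"
  shows "compact (closure (linearize F ` {\<phi> \<in> freesp. dnorm \<phi> \<le> 1}))"
  unfolding compact_eq_totally_bounded complete_eq_closed
proof (intro conjI closed_closure allI impI)
  let ?B = "{\<phi> \<in> freesp. dnorm \<phi> \<le> 1}"
  let ?L = "lipnorm F"
  fix \<epsilon> :: real assume "0 < \<epsilon>"
  define r where "r = min \<epsilon> 1"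
  have r: "0 < r" "r \<le> 1" "r \<le> \<epsilon>" unfolding r_def using \<open>0 < \<epsilon>\<close> by auto
  obtain Ys where Ys: "finite Ys" "closure (slopes F) \<subseteq> (\<Union>y\<in>Ys. ball y (r/4))"
    using K r(1) unfolding compact_eq_totally_bounded by (meson divide_pos_pos zero_less_numeral)
  define E where "E = span Ys"
  have E: "subspace E" "E \<noteq> {}" unfolding E_def using subspace_0 by auto
  have "infdist s E \<le> r/4" if "s \<in> slopes F" for s
  proof -
    obtain y where "y \<in> Ys" "dist s y < r/4"
      using Ys(2) closure_subset \<open>s \<in> slopes F\<close> by (force simp: dist_commute)
    moreover have "y \<in> E" unfolding E_def using \<open>y \<in> Ys\<close> by (rule span_base)
    ultimately show ?thesis using infdist_le[of y E s] by linarith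
  qed
  then have slopes: "infdist (F a - F b) E \<le> r/4 * norm (a - b)" for a b
    by (rule infdist_diff_le_slopes[OF E(1)])
  define Q where "Q = {u. infdist u E \<le> r/4 \<and> norm u \<le> ?L}"
  have "linearize F ` ?B \<subseteq> Q"
  proof
    fix u assume "u \<in> linearize F ` ?B"
    then obtain \<phi> where \<phi>: "\<phi> \<in> freesp" "dnorm \<phi> \<le> 1" "u = linearize F \<phi>" by blast
    have "norm u \<le> ?L * dnorm \<phi>" using norm_linearize_le[OF F \<phi>(1)] \<phi>(3) by simp
    also have "\<dots> \<le> ?L" by (rule mult_left_le[OF \<phi>(2) lipnorm_nonneg[OF F]])
    finally have "norm u \<le> ?L" .
    moreover have "infdist u E \<le> r/4 * dnorm \<phi>"
      unfolding \<phi>(3) using r by (intro infdist_linearize_le[OF F E(1) _ slopes \<phi>(1)]) auto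
    then have "infdist u E \<le> r/4" using mult_left_le[OF \<phi>(2), of "r/4"] r by linarith
    ultimately show "u \<in> Q" unfolding Q_def by simp
  qed
  moreover have "closed Q" unfolding Q_def Collect_conj_eq
    by (intro closed_Int closed_Collect_le continuous_intros continuous_on_infdist)
  ultimately have closure_Q: "closure (linearize F ` ?B) \<subseteq> Q" by (rule closure_minimal)
  obtain k where k: "finite k" "E \<inter> cball 0 (?L + 1) \<subseteq> (\<Union>x\<in>k. ball x (r/4))"
    using compact_span_Int_cball[OF Ys(1), of "?L + 1"] r(1) unfolding compact_eq_totally_bounded E_def
    by (meson divide_pos_pos zero_less_numeral)
  have "Q \<subseteq> (\<Union>x\<in>k. ball x \<epsilon>)"
  proof
    fix u assume "u \<in> Q"
    then have u: "infdist u E < r/2" "norm u \<le> ?L" unfolding Q_def using r by auto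
    obtain e where e: "e \<in> E" "dist u e < r/2" using infdist_lessE[OF E(2) u(1)] .
    have "norm e \<le> norm u + dist u e"
      unfolding dist_norm using norm_triangle_ineq3[of e u] by (simp add: norm_minus_commute)
    then have "e \<in> E \<inter> cball 0 (?L + 1)" using u e r by simp
    then obtain x where x: "x \<in> k" "dist x e < r/4" using k(2) by auto
    have "dist x u < \<epsilon>" using dist_triangle[of x u e] x e r by (simp add: dist_commute)
    then show "u \<in> (\<Union>x\<in>k. ball x \<epsilon>)" using x by auto
  qed
  then show "\<exists>k. finite k \<and> closure (linearize F ` ?B) \<subseteq> (\<Union>x\<in>k. ball x \<epsilon>)"
    using k(1) closure_Q by blast
qed

end

section \<open>Operators on the free space\<close>

definition delta :: "'a::real_normed_vector \<Rightarrow> ('a \<Rightarrow> real) \<Rightarrow> real" where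
  "delta p = delta_comb {p} (\<lambda>_. 1)"

lemma delta_eq: "delta p = (\<lambda>k. if k \<in> lip0 then k p else 0)"
  unfolding delta_def delta_comb_def by (rule ext) simp

definition free_linear :: "((('a::real_normed_vector \<Rightarrow> real) \<Rightarrow> real) \<Rightarrow> 'b::real_normed_vector) \<Rightarrow> bool" where
  "free_linear S \<longleftrightarrow> (\<forall>\<phi>\<in>freesp. \<forall>\<psi>\<in>freesp. \<forall>a b. S (\<lambda>g. a * \<phi> g + b * \<psi> g) = a *\<^sub>R S \<phi> + b *\<^sub>R S \<psi>)"

lemma compact_op_free_imp_free_linear: "compact_op_free S \<Longrightarrow> free_linear S"
  unfolding compact_op_free_def free_linear_def by blast

lemma norm_le_opnorm_free:
  assumes "bdd_above ((\<lambda>\<phi>. norm (S \<phi>)) ` {\<phi> \<in> freesp. dnorm \<phi> \<le> 1})" "\<phi> \<in> freesp" "dnorm \<phi> \<le> 1"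
  shows "norm (S \<phi>) \<le> opnorm_free S"
  unfolding opnorm_free_def using assms by (intro cSUP_upper) auto

lemma compact_op_free_bdd_above:
  assumes "compact_op_free S"
  shows "bdd_above ((\<lambda>\<phi>. norm (S \<phi>)) ` {\<phi> \<in> freesp. dnorm \<phi> \<le> 1})"
proof -
  have "bounded (closure (S ` {\<phi> \<in> freesp. dnorm \<phi> \<le> 1}))"
    using assms unfolding compact_op_free_def by (auto intro: compact_imp_bounded)
  then have "bounded (S ` {\<phi> \<in> freesp. dnorm \<phi> \<le> 1})" using bounded_subset closure_subset by blast
  then obtain M where "\<forall>y\<in>S ` {\<phi> \<in> freesp. dnorm \<phi> \<le> 1}. norm y \<le> M" unfolding bounded_iff by blast
  then show ?thesis by (intro bdd_aboveI2[where M=M]) auto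
qed

context nontrivial
begin

lemma delta_freesp: "delta p \<in> (freesp :: (('a \<Rightarrow> real) \<Rightarrow> real) set)"
  unfolding delta_def by (rule delta_comb_freesp) simp

lemma free_linear_zero:
  fixes S :: "(('a \<Rightarrow> real) \<Rightarrow> real) \<Rightarrow> 'b::real_normed_vector"
  assumes "free_linear S" shows "S (\<lambda>k. 0) = 0"
proof -
  have "S (\<lambda>k. 0 * delta 0 k + 0 * delta 0 k) = 0 *\<^sub>R S (delta 0) + 0 *\<^sub>R S (delta 0)"
    using assms delta_freesp unfolding free_linear_def by blast
  then show ?thesis by simp
qed

lemma free_linear_delta_comb:
  fixes S :: "(('a \<Rightarrow> real) \<Rightarrow> real) \<Rightarrow> 'b::real_normed_vector"
  assumes S: "free_linear S" and A: "finite A"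
  shows "S (delta_comb A c) = (\<Sum>x\<in>A. c x *\<^sub>R S (delta x))"
  using A
proof (induction A rule: finite_induct)
  case empty
  have "delta_comb {} c = (\<lambda>k. 0)" unfolding delta_comb_def by (rule ext) simp
  then show ?case using free_linear_zero[OF S] by simp
next
  case (insert a A)
  have eq: "delta_comb (insert a A) c = (\<lambda>k. 1 * delta_comb A c k + c a * delta a k)"
    using insert(1,2) unfolding delta_comb_def delta_eq by (auto simp: sum.insert)
  have "S (\<lambda>k. 1 * delta_comb A c k + c a * delta a k) = 1 *\<^sub>R S (delta_comb A c) + c a *\<^sub>R S (delta a)"
    using S delta_comb_freesp[OF insert(1)] delta_freesp unfolding free_linear_def by blast
  then show ?case unfolding eq using insert by (simp add: sum.insert)
qed

lemma free_linear_molecule: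
  fixes S :: "(('a \<Rightarrow> real) \<Rightarrow> real) \<Rightarrow> 'b::real_normed_vector"
  assumes S: "free_linear S" and pq: "p \<noteq> q"
  shows "S (molecule p q) = (S (delta p) - S (delta q)) /\<^sub>R norm (p - q)"
proof -
  have eq: "molecule p q = (\<lambda>k. (1 / norm (p - q)) * delta p k + (- 1 / norm (p - q)) * delta q k)"
    unfolding molecule_eq[OF pq] delta_eq by (auto simp: diff_divide_distrib)
  have "S (\<lambda>k. (1 / norm (p - q)) * delta p k + (- 1 / norm (p - q)) * delta q k) =
      (1 / norm (p - q)) *\<^sub>R S (delta p) + (- 1 / norm (p - q)) *\<^sub>R S (delta q)"
    using S delta_freesp unfolding free_linear_def by blast
  then show ?thesis unfolding eq by (simp add: scaleR_diff_right divide_inverse)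
qed

lemma norm_le_opnorm_free_mult_dnorm:
  fixes S :: "(('a \<Rightarrow> real) \<Rightarrow> real) \<Rightarrow> 'b::real_normed_vector"
  assumes S: "free_linear S" and bd: "bdd_above ((\<lambda>\<phi>. norm (S \<phi>)) ` {\<phi> \<in> freesp. dnorm \<phi> \<le> 1})"
    and \<phi>: "\<phi> \<in> freesp"
  shows "norm (S \<phi>) \<le> opnorm_free S * dnorm \<phi>"
proof (cases "dnorm \<phi> = 0")
  case True
  have "\<phi> = (\<lambda>k. 0)"
  proof
    fix k :: "'a \<Rightarrow> real"
    show "\<phi> k = 0"
    proof (cases "k \<in> lip0")
      case True
      then show ?thesis using abs_le_dnorm_mult_lipnorm[OF freesp_dual_bounded[OF \<phi>] freesp_lip_linear[OF \<phi>] True] \<open>dnorm \<phi> = 0\<close> by simp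
    next
      case False then show ?thesis using freesp_vanishes[OF \<phi>] by simp
    qed
  qed
  then show ?thesis using free_linear_zero[OF S] True by simp
next
  case False
  define d where "d = dnorm \<phi>"
  have d: "d > 0" using False dnorm_nonneg[OF freesp_dual_bounded[OF \<phi>]] d_def by simp
  define \<phi>' where "\<phi>' = (\<lambda>k. (1/d) * \<phi> k + 0 * \<phi> k)"
  have \<phi>'f: "\<phi>' \<in> freesp" unfolding \<phi>'_def by (rule freesp_lincomb[OF \<phi> \<phi>])
  have "dnorm \<phi>' \<le> (1/d) * dnorm \<phi> + 0 * dnorm \<phi>"
    unfolding \<phi>'_def using freesp_dual_bounded[OF \<phi>] d by (intro dnorm_le_lincomb) (auto simp: abs_mult)
  then have "dnorm \<phi>' \<le> 1" using d d_def by simp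
  then have "norm (S \<phi>') \<le> opnorm_free S" by (rule norm_le_opnorm_free[OF bd \<phi>'f])
  moreover have "S \<phi>' = (1/d) *\<^sub>R S \<phi> + 0 *\<^sub>R S \<phi>" unfolding \<phi>'_def using S \<phi> unfolding free_linear_def by blast
  ultimately have "(1/d) * norm (S \<phi>) \<le> opnorm_free S" using d by simp
  then show ?thesis using d d_def by (simp add: field_simps)
qed

lemma linearize_delta:
  fixes F :: "'a \<Rightarrow> 'b::banach"
  assumes "F \<in> lip0"
  shows "linearize F (delta p) = F p"
  using linearize_eq_linearize_span[OF assms delta_comb_in_span]
    linearize_span_delta_comb[OF assms, of "{p}"] by (simp add: delta_def)

lemma free_linear_linearize:
  fixes F :: "'a \<Rightarrow> 'b::banach"
  assumes "F \<in> lip0" shows "free_linear (linearize F)"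
  unfolding free_linear_def using linearize_lincomb[OF assms] by blast

lemma opnorm_free_linearize:
  fixes F :: "'a \<Rightarrow> 'b::banach"
  assumes F: "F \<in> lip0"
  shows "opnorm_free (linearize F) = lipnorm F"
proof -
  let ?B = "{\<phi> \<in> freesp. dnorm \<phi> \<le> 1}"
  have bound: "norm (linearize F \<phi>) \<le> lipnorm F" if "\<phi> \<in> ?B" for \<phi>
  proof -
    have "norm (linearize F \<phi>) \<le> lipnorm F * dnorm \<phi>"
      using that by (intro norm_linearize_le[OF F]) auto
    also have "\<dots> \<le> lipnorm F * 1" using that lipnorm_nonneg[OF F] by (intro mult_left_mono) auto
    finally show ?thesis by simp
  qed
  have bdd: "bdd_above ((\<lambda>\<phi>. norm (linearize F \<phi>)) ` ?B)" by (rule bdd_aboveI2) (rule bound)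
  have "opnorm_free (linearize F) \<le> lipnorm F"
    unfolding opnorm_free_def using molecule_dnorm_le bound by (rule_tac cSUP_least) blast+
  moreover have "lipnorm F \<le> opnorm_free (linearize F)"
  proof (rule lipnorm_le)
    fix p q :: 'a assume "p \<noteq> q"
    then have "norm (F p - F q) / norm (p - q) = norm (linearize F (molecule p q))"
      by (simp add: linearize_molecule[OF F] divide_inverse_commute)
    also have "\<dots> \<le> opnorm_free (linearize F)"
      by (rule norm_le_opnorm_free[OF bdd molecule_freesp dnorm_molecule_le])
    finally show "norm (F p - F q) / norm (p - q) \<le> opnorm_free (linearize F)" .
  qed
  ultimately show ?thesis by simp
qed

lemma compact_op_free_linearize:
  fixes F :: "'a \<Rightarrow> 'b::banach"
  assumes "F \<in> lip0K"
  shows "compact_op_free (linearize F)"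
proof -
  have F: "F \<in> lip0" "compact (closure (slopes F))" using assms(1) unfolding lip0K_def by auto
  show ?thesis
    unfolding compact_op_free_def
    using free_linear_linearize[OF F(1), unfolded free_linear_def] compact_linearize_image[OF F]
    by (intro conjI)
qed

lemma free_linear_restrict_delta:
  fixes S :: "(('a \<Rightarrow> real) \<Rightarrow> real) \<Rightarrow> 'b::real_normed_vector"
  assumes S: "free_linear S" and bdd: "bdd_above ((\<lambda>\<phi>. norm (S \<phi>)) ` {\<phi> \<in> freesp. dnorm \<phi> \<le> 1})"
  shows "(\<lambda>p. S (delta p)) \<in> lip0" "lipnorm (\<lambda>p. S (delta p)) \<le> opnorm_free S"
proof -
  have slope: "norm (S (delta p) - S (delta q)) / norm (p - q) \<le> opnorm_free S" if "p \<noteq> q" for p q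
  proof -
    have "norm (S (delta p) - S (delta q)) / norm (p - q) = norm (S (molecule p q))"
      using free_linear_molecule[OF S that] by (simp add: divide_inverse_commute)
    also have "\<dots> \<le> opnorm_free S"
      by (rule norm_le_opnorm_free[OF bdd molecule_freesp dnorm_molecule_le])
    finally show ?thesis .
  qed
  have "norm (S (delta p) - S (delta q)) \<le> opnorm_free S * norm (p - q)" for p q
    using slope[of p q] by (cases "p = q") (simp_all add: pos_divide_le_eq)
  moreover have "delta (0::'a) = (\<lambda>k. 0)" unfolding delta_eq by (rule ext) (simp add: lip0_def)
  then have "S (delta 0) = 0" using free_linear_zero[OF S] by simp
  ultimately show "(\<lambda>p. S (delta p)) \<in> lip0" by (intro lip0I)
  show "lipnorm (\<lambda>p. S (delta p)) \<le> opnorm_free S" by (rule lipnorm_le[OF slope])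
qed

lemma compact_op_free_restrict_delta:
  fixes S :: "(('a \<Rightarrow> real) \<Rightarrow> real) \<Rightarrow> 'b::real_normed_vector"
  assumes S: "compact_op_free S"
  shows "(\<lambda>p. S (delta p)) \<in> lip0K" "lipnorm (\<lambda>p. S (delta p)) \<le> opnorm_free S"
proof -
  let ?B = "{\<phi> \<in> freesp. dnorm \<phi> \<le> 1}"
  have lin: "free_linear S" by (rule compact_op_free_imp_free_linear[OF S])
  have "slopes (\<lambda>p. S (delta p)) \<subseteq> S ` ?B"
  proof
    fix s assume "s \<in> slopes (\<lambda>p. S (delta p))"
    then obtain p q where "p \<noteq> q" "s = (S (delta p) - S (delta q)) /\<^sub>R norm (p - q)"
      unfolding slopes_def by blast
    then have "s = S (molecule p q)" using free_linear_molecule[OF lin] by simp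
    then show "s \<in> S ` ?B" by (rule image_eqI[OF _ molecule_dnorm_le])
  qed
  then have sub: "closure (slopes (\<lambda>p. S (delta p))) \<subseteq> closure (S ` ?B)" by (rule closure_mono)
  have "compact (closure (S ` ?B))" using S unfolding compact_op_free_def by (rule conjunct2)
  then have "compact (closure (S ` ?B) \<inter> closure (slopes (\<lambda>p. S (delta p))))"
    by (rule compact_Int_closed[OF _ closed_closure])
  then have "compact (closure (slopes (\<lambda>p. S (delta p))))" using sub by (simp add: Int_absorb1)
  moreover have bdd: "bdd_above ((\<lambda>\<phi>. norm (S \<phi>)) ` ?B)" by (rule compact_op_free_bdd_above[OF S])
  ultimately show "(\<lambda>p. S (delta p)) \<in> lip0K"
    unfolding lip0K_def using free_linear_restrict_delta(1)[OF lin] by simp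
  show "lipnorm (\<lambda>p. S (delta p)) \<le> opnorm_free S" by (rule free_linear_restrict_delta(2)[OF lin bdd])
qed

lemma lipnorm_restrict_delta_diff_le:
  fixes S T :: "(('a \<Rightarrow> real) \<Rightarrow> real) \<Rightarrow> 'b::real_normed_vector"
  assumes S: "compact_op_free S" and T: "compact_op_free T"
  shows "lipnorm (\<lambda>p. S (delta p) - T (delta p)) \<le> opnorm_free (\<lambda>\<phi>. S \<phi> - T \<phi>)"
proof (rule free_linear_restrict_delta)
  show "free_linear (\<lambda>\<phi>. S \<phi> - T \<phi>)"
    using compact_op_free_imp_free_linear[OF S] compact_op_free_imp_free_linear[OF T]
    unfolding free_linear_def by (simp add: algebra_simps)
  obtain MS where "\<And>\<phi>. \<phi> \<in> {\<phi> \<in> freesp. dnorm \<phi> \<le> 1} \<Longrightarrow> norm (S \<phi>) \<le> MS"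
    using compact_op_free_bdd_above[OF S] unfolding bdd_above_def by auto
  moreover obtain MT where "\<And>\<phi>. \<phi> \<in> {\<phi> \<in> freesp. dnorm \<phi> \<le> 1} \<Longrightarrow> norm (T \<phi>) \<le> MT"
    using compact_op_free_bdd_above[OF T] unfolding bdd_above_def by auto
  ultimately show "bdd_above ((\<lambda>\<phi>. norm (S \<phi> - T \<phi>)) ` {\<phi> \<in> freesp. dnorm \<phi> \<le> 1})"
    by (intro bdd_aboveI2[where M = "MS + MT"]) (smt (verit) norm_triangle_ineq4)
qed

lemma norm_free_linear_diff_le:
  fixes S :: "(('a \<Rightarrow> real) \<Rightarrow> real) \<Rightarrow> 'b::real_normed_vector"
  assumes S: "compact_op_free S" and "\<phi> \<in> freesp" "\<psi> \<in> freesp"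
  shows "norm (S \<phi> - S \<psi>) \<le> opnorm_free S * dnorm (\<lambda>k. \<phi> k - \<psi> k)"
proof -
  have lin: "free_linear S" by (rule compact_op_free_imp_free_linear[OF S])
  then have "S (\<lambda>k. 1 * \<phi> k + (-1) * \<psi> k) = 1 *\<^sub>R S \<phi> + (-1) *\<^sub>R S \<psi>"
    using assms(2,3) unfolding free_linear_def by blast
  then show ?thesis
    using norm_le_opnorm_free_mult_dnorm[OF lin compact_op_free_bdd_above[OF S]
        freesp_lincomb[OF assms(2,3), of 1 "-1"]] by simp
qed

end

section \<open>Pairs of points almost norming two Lipschitz maps\<close>

lemma (in nontrivial) exists_pair_combined_slope:
  fixes g :: "'a \<Rightarrow> 'b::real_normed_vector" and h :: "'a \<Rightarrow> 'c::real_normed_vector"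
  assumes g: "g \<in> lip0" and h: "h \<in> lip0" and A: "finite A" and \<tau>: "0 \<le> \<tau>" and \<delta>: "0 < \<delta>"
  obtains p q where "p \<noteq> q"
    "(norm (\<Sum>x\<in>A. c x *\<^sub>R g x) + \<tau> * norm (\<Sum>x\<in>A. c x *\<^sub>R h x)) / dnorm (delta_comb A c) - \<delta>
       < norm (g p - g q) / norm (p - q) + \<tau> * (norm (h p - h q) / norm (p - q))"
proof -
  define N where "N = norm (\<Sum>x\<in>A. c x *\<^sub>R g x)"
  define M where "M = norm (\<Sum>x\<in>A. c x *\<^sub>R h x)"
  obtain l1 where l1: "linear l1" "\<forall>y. \<bar>l1 y\<bar> \<le> norm y" "l1 (\<Sum>x\<in>A. c x *\<^sub>R g x) = N"
    unfolding N_def using norming_functional by blast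
  obtain l2 where l2: "linear l2" "\<forall>y. \<bar>l2 y\<bar> \<le> norm y" "l2 (\<Sum>x\<in>A. c x *\<^sub>R h x) = M"
    unfolding M_def using norming_functional by blast
  define K where "K = (\<lambda>t. l1 (g t) + \<tau> * l2 (h t))"
  have K_diff: "\<bar>K a - K b\<bar> \<le> norm (g a - g b) + \<tau> * norm (h a - h b)" for a b
  proof -
    have "K a - K b = l1 (g a - g b) + \<tau> * l2 (h a - h b)"
      unfolding K_def by (simp add: linear_diff[OF l1(1)] linear_diff[OF l2(1)] algebra_simps)
    then have "\<bar>K a - K b\<bar> \<le> \<bar>l1 (g a - g b)\<bar> + \<bar>\<tau> * l2 (h a - h b)\<bar>"
      by (simp add: abs_triangle_ineq)
    also have "\<dots> = \<bar>l1 (g a - g b)\<bar> + \<tau> * \<bar>l2 (h a - h b)\<bar>"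
      using \<tau> by (simp add: abs_mult)
    also have "\<dots> \<le> norm (g a - g b) + \<tau> * norm (h a - h b)"
      using l1(2) l2(2) \<tau> by (intro add_mono mult_left_mono) auto
    finally show ?thesis .
  qed
  have K: "K \<in> lip0"
  proof (rule lip0I[where C = "lipnorm g + \<tau> * lipnorm h"])
    show "K 0 = 0"
      using g h linear_0[OF l1(1)] linear_0[OF l2(1)] unfolding K_def lip0_def by simp
    fix a b :: 'a
    have "norm (g a - g b) + \<tau> * norm (h a - h b) \<le> lipnorm g * norm (a - b) + \<tau> * (lipnorm h * norm (a - b))"
      using lipnorm_Lipschitz[OF g] lipnorm_Lipschitz[OF h] \<tau> by (intro add_mono mult_left_mono) auto
    then show "norm (K a - K b) \<le> (lipnorm g + \<tau> * lipnorm h) * norm (a - b)"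
      using K_diff[of a b] by (simp add: algebra_simps)
  qed
  have "delta_comb A c K = l1 (\<Sum>x\<in>A. c x *\<^sub>R g x) + \<tau> * l2 (\<Sum>x\<in>A. c x *\<^sub>R h x)"
    using K unfolding delta_comb_def K_def
    by (simp add: linear_sum[OF l1(1)] linear_scale[OF l1(1)] linear_sum[OF l2(1)]
        linear_scale[OF l2(1)] sum.distrib sum_distrib_left algebra_simps)
  then have "delta_comb A c K = N + \<tau> * M" using l1(3) l2(3) by simp
  then have "N + \<tau> * M \<le> dnorm (delta_comb A c) * lipnorm K"
    using abs_le_D1[OF abs_le_dnorm_mult_lipnorm[OF dual_bounded_delta_comb[OF A] lip_linear_delta_comb K, of c]]
    by simp
  then have "(N + \<tau> * M) / dnorm (delta_comb A c) \<le> lipnorm K"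
    using lipnorm_nonneg[OF K] dnorm_nonneg[OF dual_bounded_delta_comb[OF A], of c]
    by (cases "dnorm (delta_comb A c) = 0") (auto simp: pos_divide_le_eq mult.commute)
  then have "(N + \<tau> * M) / dnorm (delta_comb A c) - \<delta> < lipnorm K" using \<delta> by linarith
  then obtain p q where pq: "p \<noteq> q" "(N + \<tau> * M) / dnorm (delta_comb A c) - \<delta> < norm (K p - K q) / norm (p - q)"
    using K by (auto elim: less_lipnormE)
  have "norm (K p - K q) / norm (p - q) \<le> (norm (g p - g q) + \<tau> * norm (h p - h q)) / norm (p - q)"
    using K_diff[of p q] by (intro divide_right_mono) auto
  then show ?thesis
    using that[OF pq(1)] pq(2) unfolding N_def M_def by (simp add: add_divide_distrib)
qed

text \<open>
  The arithmetic of \<open>exists_pair_near_norming\<close>: \<open>N\<close>, \<open>D\<close> and \<open>M\<close> stand for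
  \<open>norm (S \<psi>)\<close>, \<open>dnorm \<psi>\<close> and \<open>norm (\<Sum> c x *\<^sub>R h x)\<close>, while \<open>G\<close> and \<open>H\<close> are the
  slopes of \<open>g\<close> and \<open>h\<close> at the chosen pair.
\<close>
lemma combined_slope_arith:
  fixes \<tau> \<delta> \<gamma> \<epsilon> N D M G H :: real
  assumes \<tau>: "0 < \<tau>" "\<tau> \<le> 1" and \<delta>: "0 < \<delta>" "10 * \<delta> \<le> \<tau> * \<gamma>" "10 * \<delta> \<le> \<tau>"
    and \<epsilon>: "\<epsilon> < 1"
    and N: "1 - \<delta> \<le> N" "N \<le> D" "D \<le> 1 + \<delta>"
    and M: "1 - \<epsilon> + \<gamma> - \<delta> < M" "0 \<le> M" "M \<le> 2"
    and G: "G \<le> 1" and H: "H \<le> 1"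
    and slope: "(N + \<tau> * M) / D - \<delta> < G + \<tau> * H"
  shows "1 - \<epsilon> < H" "1 - \<tau> < G"
proof -
  define X where "X = N + \<tau> * M"
  have \<tau>M: "0 \<le> \<tau> * M" "\<tau> * M \<le> 2" using M \<tau> by (auto simp: mult_le_one[of \<tau> "M/2", simplified])
  have X: "0 < X" "X \<le> 4" using N \<delta> \<tau> \<tau>M unfolding X_def by linarith+
  have D: "0 < D" using N \<delta> \<tau> by linarith
  have "X * (1 - \<delta>) \<le> X / (1 + \<delta>)"
    using X \<delta> by (simp add: field_simps mult_nonneg_nonneg)
  also have "\<dots> \<le> X / D" using X D N by (intro divide_left_mono) auto
  finally have "X - X * \<delta> \<le> X / D" by (simp add: algebra_simps)
  moreover have "X * \<delta> \<le> 4 * \<delta>" using X \<delta> by (intro mult_right_mono) auto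
  ultimately have "X - 4 * \<delta> \<le> X / D" by linarith
  moreover have "\<tau> * (1 - \<epsilon> + \<gamma> - \<delta>) \<le> \<tau> * M" using M \<tau> by (intro mult_left_mono) auto
  moreover have "\<tau> * \<delta> \<le> \<delta>" using \<tau> \<delta> by (simp add: mult_left_le_one_le)
  ultimately have key: "1 + \<tau> * (1 - \<epsilon>) + (\<tau> * \<gamma> - 7 * \<delta>) < G + \<tau> * H"
    using slope N unfolding X_def by (simp add: algebra_simps)
  have margin: "0 \<le> \<tau> * \<gamma> - 7 * \<delta>" "0 < \<tau> * (1 - \<epsilon>)" using \<delta> \<tau> \<epsilon> by auto
  have "\<tau> * (1 - \<epsilon>) < \<tau> * H" using key G margin by linarith
  then show "1 - \<epsilon> < H" using \<tau> by simp
  have "\<tau> * H \<le> \<tau>" using H \<tau> by simp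
  then show "1 - \<tau> < G" using key margin by linarith
qed

lemma (in nontrivial) delta_comb_approx_norming:
  fixes S :: "(('a \<Rightarrow> real) \<Rightarrow> real) \<Rightarrow> 'b::real_normed_vector"
  assumes S: "compact_op_free S" "opnorm_free S = 1"
    and v: "v \<in> freesp" "dnorm v = 1" "norm (S v) = 1" and \<delta>: "0 < \<delta>"
  obtains A c where "finite A" "dnorm (\<lambda>k. v k - delta_comb A c k) < \<delta>"
    "1 - \<delta> \<le> norm (S (delta_comb A c))" "norm (S (delta_comb A c)) \<le> dnorm (delta_comb A c)"
    "dnorm (delta_comb A c) \<le> 1 + \<delta>"
proof -
  obtain \<psi> where \<psi>: "\<psi> \<in> delta_span" "dnorm (\<lambda>k. v k - \<psi> k) < \<delta>"
    using v(1) \<delta> unfolding freesp_def by blast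
  obtain A c where A: "finite A" "\<psi> = delta_comb A c" using \<psi>(1) by (rule delta_spanE)
  have \<psi>_free: "\<psi> \<in> freesp" by (rule delta_span_freesp[OF \<psi>(1)])
  have bounded: "dual_bounded v" "dual_bounded \<psi>" using freesp_dual_bounded v(1) \<psi>_free by auto
  have "norm (S \<psi> - S v) \<le> dnorm (\<lambda>k. \<psi> k - v k)"
    using norm_free_linear_diff_le[OF S(1) \<psi>_free v(1)] S(2) by simp
  then have "1 - \<delta> \<le> norm (S \<psi>)"
    using \<psi>(2) dnorm_commute[OF bounded] v(3) norm_triangle_ineq3[of "S \<psi>" "S v"] by simp
  moreover have "norm (S \<psi>) \<le> dnorm \<psi>"
    using norm_le_opnorm_free_mult_dnorm[OF compact_op_free_imp_free_linear[OF S(1)]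
        compact_op_free_bdd_above[OF S(1)] \<psi>_free] S(2) by simp
  moreover have "dnorm \<psi> \<le> 1 * dnorm v + 1 * dnorm (\<lambda>k. v k - \<psi> k)"
    by (rule dnorm_le_lincomb[OF bounded(1) dual_bounded_diff[OF bounded]]) auto
  then have "dnorm \<psi> \<le> 1 + \<delta>" using v(2) \<psi>(2) by simp
  ultimately show ?thesis using that[OF A(1)] \<psi>(2) unfolding A(2) by blast
qed

lemma (in nontrivial) exists_pair_near_norming:
  fixes S :: "(('a \<Rightarrow> real) \<Rightarrow> real) \<Rightarrow> 'b::real_normed_vector" and h :: "'a \<Rightarrow> 'c::real_normed_vector"
  assumes S: "compact_op_free S" "opnorm_free S = 1"
    and v: "v \<in> freesp" "dnorm v = 1" "norm (S v) = 1"
    and h: "h \<in> lip0" "lipnorm h = 1"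
    and xy: "x \<noteq> y" "norm (h x - h y) / norm (x - y) = 1"
    and close: "dnorm (\<lambda>k. v k - molecule x y k) < \<epsilon>"
    and \<epsilon>: "\<epsilon> < 1" and \<sigma>: "0 < \<sigma>"
  obtains p q where "p \<noteq> q" "1 - \<sigma> < norm (S (delta p) - S (delta q)) / norm (p - q)"
    "1 - \<epsilon> < norm (h p - h q) / norm (p - q)"
proof -
  define g where "g = (\<lambda>p. S (delta p))"
  have g: "g \<in> lip0" "lipnorm g \<le> 1"
    using compact_op_free_restrict_delta[OF S(1)] S(2) unfolding g_def lip0K_def by auto
  define w where "w = molecule x y"
  define \<gamma> where "\<gamma> = \<epsilon> - dnorm (\<lambda>k. v k - w k)"
  define \<tau> where "\<tau> = min \<sigma> 1"
  define \<delta> where "\<delta> = \<tau> * min \<gamma> 1 / 10"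
  have \<gamma>: "0 < \<gamma>" using close unfolding \<gamma>_def w_def by simp
  have \<tau>: "0 < \<tau>" "\<tau> \<le> 1" "\<tau> \<le> \<sigma>" using \<sigma> unfolding \<tau>_def by auto
  have \<delta>: "0 < \<delta>" "10 * \<delta> \<le> \<tau> * \<gamma>" "10 * \<delta> \<le> \<tau>"
    using \<tau> \<gamma> unfolding \<delta>_def by (auto intro: mult_left_mono)
  obtain A c where A: "finite A" "dnorm (\<lambda>k. v k - delta_comb A c k) < \<delta>"
    and N: "1 - \<delta> \<le> norm (S (delta_comb A c))" "norm (S (delta_comb A c)) \<le> dnorm (delta_comb A c)"
      "dnorm (delta_comb A c) \<le> 1 + \<delta>"
    by (rule delta_comb_approx_norming[where S = S and v = v, OF S v \<delta>(1)])
  let ?\<psi> = "delta_comb A c"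
  define M where "M = norm (\<Sum>x\<in>A. c x *\<^sub>R h x)"
  have w: "w \<in> delta_span" "w \<in> freesp" unfolding w_def by (rule molecule_in_delta_span molecule_freesp)+
  have bounded: "dual_bounded v" "dual_bounded ?\<psi>" "dual_bounded w"
    using freesp_dual_bounded v(1) dual_bounded_delta_comb[OF A(1)] w(2) by auto
  have M_eq: "linearize_span h ?\<psi> = (\<Sum>x\<in>A. c x *\<^sub>R h x)" by (rule linearize_span_delta_comb[OF h(1) A(1)])
  have "norm (linearize_span h w) = 1"
    using xy unfolding w_def linearize_span_molecule[OF h(1) xy(1)] by (simp add: divide_inverse_commute)
  moreover have "dnorm (\<lambda>k. ?\<psi> k - w k) \<le> dnorm (\<lambda>k. ?\<psi> k - v k) + dnorm (\<lambda>k. v k - w k)"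
    by (rule dnorm_triangle[OF bounded(2,1,3)])
  then have "norm (linearize_span h ?\<psi> - linearize_span h w) < \<delta> + (\<epsilon> - \<gamma>)"
    using norm_linearize_span_diff_le[OF h(1) delta_comb_in_span[OF A(1), of c] w(1)] A(2) h(2)
      dnorm_commute[OF bounded(1,2)] unfolding \<gamma>_def by simp
  ultimately have M_gt: "1 - \<epsilon> + \<gamma> - \<delta> < M"
    unfolding M_def M_eq[symmetric] using norm_triangle_ineq3[of "linearize_span h w" "linearize_span h ?\<psi>"]
    by (simp add: norm_minus_commute)
  have "M \<le> 1 * dnorm ?\<psi>" unfolding M_def M_eq[symmetric] h(2)[symmetric]
    by (rule norm_linearize_span_le[OF h(1) delta_comb_in_span[OF A(1), of c]])
  then have M_le: "M \<le> 2" using N(3) \<delta> \<tau> by linarith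
  obtain p q where pq: "p \<noteq> q"
    "(norm (S ?\<psi>) + \<tau> * M) / dnorm ?\<psi> - \<delta>
       < norm (g p - g q) / norm (p - q) + \<tau> * (norm (h p - h q) / norm (p - q))"
    using exists_pair_combined_slope[OF g(1) h(1) A(1), of \<tau> \<delta> c] \<tau> \<delta>
    unfolding M_def free_linear_delta_comb[OF compact_op_free_imp_free_linear[OF S(1)] A(1)] g_def
    by auto
  have "norm (g p - g q) / norm (p - q) \<le> 1" "norm (h p - h q) / norm (p - q) \<le> 1"
    using slope_le_lipnorm[OF g(1) pq(1)] slope_le_lipnorm[OF h(1) pq(1)] g(2) h(2) by auto
  with combined_slope_arith[OF \<tau>(1,2) \<delta> \<epsilon> N M_gt _ M_le _ _ pq(2)] \<tau>(3)
  show ?thesis using that[OF pq(1)] unfolding g_def M_def by force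
qed

lemma tendsto_norm_one_subseq:
  fixes s :: "nat \<Rightarrow> 'b::real_normed_vector"
  assumes "compact C" "\<And>n. s n \<in> C" "(\<lambda>n. norm (s n)) \<longlonglongrightarrow> 1"
  obtains r z where "strict_mono r" "norm z = 1" "(s \<circ> r) \<longlonglongrightarrow> z"
proof -
  obtain r z where r: "strict_mono r" "(s \<circ> r) \<longlonglongrightarrow> z"
    using assms(1,2) unfolding compact_eq_seq_compact_metric seq_compact_def by metis
  have "(\<lambda>n. norm ((s \<circ> r) n)) \<longlonglongrightarrow> norm z" by (rule tendsto_norm[OF r(2)])
  moreover have "(\<lambda>n. norm ((s \<circ> r) n)) \<longlonglongrightarrow> 1"
    using LIMSEQ_subseq_LIMSEQ[OF assms(3) r(1)] by (simp add: comp_def)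
  ultimately have "norm z = 1" by (rule LIMSEQ_unique)
  with r that show ?thesis by blast
qed

lemma (in nontrivial) norming_pairs_subseq:
  fixes g :: "'a \<Rightarrow> 'b::real_normed_vector"
  assumes g: "g \<in> lip0K" "lipnorm g \<le> 1"
    and PQ: "\<And>n. P n \<noteq> Q n" "\<And>n. 1 - 1 / real (Suc n) < norm (g (P n) - g (Q n)) / norm (P n - Q n)"
  obtains r z where "lipnorm g = 1" "strict_mono r" "norm z = 1"
    "(\<lambda>n. (g (P (r n)) - g (Q (r n))) /\<^sub>R norm (P (r n) - Q (r n))) \<longlonglongrightarrow> z"
proof -
  define s where "s n = (g (P n) - g (Q n)) /\<^sub>R norm (P n - Q n)" for n
  have s_norm: "norm (s n) = norm (g (P n) - g (Q n)) / norm (P n - Q n)" for n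
    unfolding s_def by (simp add: divide_inverse_commute)
  have g_lip: "g \<in> lip0" using g(1) unfolding lip0K_def by simp
  have s_le: "norm (s n) \<le> lipnorm g" for n
    unfolding s_norm by (rule slope_le_lipnorm[OF g_lip PQ(1)])
  have s_bounds: "1 - inverse (real (Suc n)) \<le> norm (s n)" "norm (s n) \<le> 1" for n
    using PQ(2)[of n] s_le[of n] g(2) by (simp_all add: s_norm inverse_eq_divide)
  have s_lim: "(\<lambda>n. norm (s n)) \<longlonglongrightarrow> 1"
  proof (rule tendsto_sandwich)
    show "\<forall>\<^sub>F n in sequentially. 1 - inverse (real (Suc n)) \<le> norm (s n)"
      "\<forall>\<^sub>F n in sequentially. norm (s n) \<le> 1"
      using s_bounds by simp_all
    show "(\<lambda>n. 1 - inverse (real (Suc n))) \<longlonglongrightarrow> 1"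
      using tendsto_diff[OF tendsto_const LIMSEQ_inverse_real_of_nat, of 1] by simp
  qed simp
  have "s n \<in> slopes g" for n using PQ(1) unfolding s_def slopes_def by blast
  then have "s n \<in> closure (slopes g)" for n using closure_subset by blast
  moreover have "compact (closure (slopes g))" using g(1) unfolding lip0K_def by simp
  ultimately obtain r z where "strict_mono r" "norm z = 1" "(s \<circ> r) \<longlonglongrightarrow> z"
    using s_lim by (elim tendsto_norm_one_subseq)
  moreover have "1 \<le> lipnorm g" using s_le by (intro LIMSEQ_le_const2[OF s_lim]) auto
  ultimately show ?thesis using that g(2) unfolding s_def comp_def by simp
qed

lemma bpbp_compact_freeE:
  fixes T :: "(('a::real_normed_vector \<Rightarrow> real) \<Rightarrow> real) \<Rightarrow> 'b::real_normed_vector"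
  assumes "bpbp_compact_free TYPE('a) TYPE('b) eta" "0 < \<epsilon>" "\<epsilon> < 1"
    and "compact_op_free T" "opnorm_free T = 1" "w \<in> freesp" "dnorm w = 1" "1 - eta \<epsilon> < norm (T w)"
  obtains S v where "compact_op_free S" "opnorm_free S = 1" "v \<in> freesp" "dnorm v = 1"
    "norm (S v) = 1" "opnorm_free (\<lambda>\<phi>. S \<phi> - T \<phi>) < \<epsilon>" "dnorm (\<lambda>k. v k - w k) < \<epsilon>"
proof -
  note bpbp = assms(1)[unfolded bpbp_compact_free_def, THEN conjunct2, rule_format,
      OF conjI[OF assms(2,3)], of T w]
  show ?thesis using bpbp assms(4-8) that by blast
qed

theorem lemma4p2:
  fixes eta :: "real \<Rightarrow> real"
    and f h :: "'a::banach \<Rightarrow> 'b::banach"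
    and x y :: 'a
    and \<epsilon> :: real
  assumes "bpbp_compact_free TYPE('a) TYPE('b) eta"
    and "0 < \<epsilon>" and "\<epsilon> < 1"
    and "f \<in> lip0K" and "lipnorm f = 1"
    and "x \<noteq> y"
    and "norm (f x - f y) / norm (x - y) > 1 - eta \<epsilon>"
    and "h \<in> lip0" and "lipnorm h = 1"
    and "norm (h x - h y) / norm (x - y) = 1"
  shows "\<exists>g z (v :: nat \<Rightarrow> 'a) w.
           g \<in> lip0K \<and> lipnorm g = 1 \<and> norm z = 1 \<and> (\<forall>n. v n \<noteq> w n)
           \<and> lipnorm (\<lambda>t. g t - f t) < \<epsilon>
           \<and> (\<forall>n. norm (h (v n) - h (w n)) / norm (v n - w n) > 1 - \<epsilon>)
           \<and> ((\<lambda>n. (g (v n) - g (w n)) /\<^sub>R norm (v n - w n)) \<longlonglongrightarrow> z)"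
proof -
  interpret nontrivial "x - y" using assms(6) by unfold_locales simp
  have f: "f \<in> lip0" using assms(4) unfolding lip0K_def by simp
  define T where "T = linearize f"
  have T: "compact_op_free T" "opnorm_free T = 1" "1 - eta \<epsilon> < norm (T (molecule x y))"
    using compact_op_free_linearize[OF assms(4)] opnorm_free_linearize[OF f] assms(5,7)
    unfolding T_def linearize_molecule[OF f assms(6)] by (auto simp: divide_inverse_commute)
  obtain S v where S: "compact_op_free S" "opnorm_free S = 1" "v \<in> freesp" "dnorm v = 1"
      "norm (S v) = 1" "opnorm_free (\<lambda>\<phi>. S \<phi> - T \<phi>) < \<epsilon>" "dnorm (\<lambda>k. v k - molecule x y k) < \<epsilon>"
    by (rule bpbp_compact_freeE[OF assms(1-3) T(1,2) molecule_freesp dnorm_molecule[OF assms(6)], OF T(3)])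
  define g where "g = (\<lambda>p. S (delta p))"
  have g: "g \<in> lip0K" "lipnorm g \<le> 1"
    using compact_op_free_restrict_delta[OF S(1)] S(2) unfolding g_def by auto
  have "lipnorm (\<lambda>t. g t - f t) < \<epsilon>"
    using lipnorm_restrict_delta_diff_le[OF S(1) T(1)] S(6) unfolding g_def T_def linearize_delta[OF f] by simp
  moreover have "\<exists>p q. p \<noteq> q \<and> 1 - 1 / real (Suc n) < norm (g p - g q) / norm (p - q)
      \<and> 1 - \<epsilon> < norm (h p - h q) / norm (p - q)" for n :: nat
    by (rule exists_pair_near_norming[where S = S and v = v and h = h and x = x and y = y
          and \<sigma> = "1 / real (Suc n)", OF S(1-5) assms(8,9,6,10) S(7) assms(3)]) (auto simp: g_def)
  then obtain P Q where PQ: "\<And>n. P n \<noteq> Q n"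
    "\<And>n. 1 - 1 / real (Suc n) < norm (g (P n) - g (Q n)) / norm (P n - Q n)"
    "\<And>n. 1 - \<epsilon> < norm (h (P n) - h (Q n)) / norm (P n - Q n)"
    by metis
  moreover obtain r z where "lipnorm g = 1" "strict_mono r" "norm z = 1"
    "(\<lambda>n. (g (P (r n)) - g (Q (r n))) /\<^sub>R norm (P (r n) - Q (r n))) \<longlonglongrightarrow> z"
    by (rule norming_pairs_subseq[OF g PQ(1,2)])
  ultimately show ?thesis
    using g(1) by (intro exI[of _ g] exI[of _ z] exI[of _ "P \<circ> r"] exI[of _ "Q \<circ> r"]) simp
qed

end
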